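(* Let $\mathcal C$ be a $G$-category and $(P,\phi)\colon\mathcal C\to\mathcal C/G$ the canonical functor. For every category $\mathcal C'$, the functor $(P,\phi)^*\colon\operatorname{Fun}(\mathcal C/G,\mathcal C')\to\operatorname{Inv}(\mathcal C,\mathcal C')$, sending a functor $H$ to $(HP,H\phi)$ and a natural transformation $\eta\colon H\to H'$ to $\eta P$, is an isomorphism of categories.
   Context: $\Bbbk$ is a commutative ring; all categories and functors are $\Bbbk$-linear; $G$ is a group. A $G$-category is a category $\mathcal C$ with a group homomorphism $A\colon G\to\operatorname{Aut}(\mathcal C)$; write $\alpha x=A_\alpha x$, $\alpha f=A_\alpha f$. An invariance adjuster of $F\colon\mathcal C\to\mathcal C'$ is a family of natural isomorphisms $\phi_\alpha\colon F\to FA_\alpha$ ($\alpha\in G$) with $\phi_1=\mathrm{id}$ and $(\phi_\beta A_\alpha)\phi_\alpha=\phi_{\beta\alpha}$; $(F,\phi)$ is a $G$-invariant functor. A morphism $(F,\phi)\to(F',\phi')$ is a natural transformation $\eta\colon F\to F'$ with $(\eta A_\alpha)\phi_\alpha=\phi'_\alpha\eta$ for all $\alpha$. $\operatorname{Inv}(\mathcal C,\mathcal C')$ is the category of $G$-invariant functors $\mathcal C\to\mathcal C'$ and their morphisms; $\operatorname{Fun}(\mathcal C/G,\mathcal C')$ is the category of functors and natural transformations. The orbit category $\mathcal C/G$: objects those of $\mathcal C$; morphisms $x\to y$ are row- and column-finite families $f=(f_{\beta,\alpha})_{(\alpha,\beta)\in G\times G}$, $f_{\beta,\alpha}\in\mathcal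 C(\alpha x,\beta y)$, with $f_{\gamma\beta,\gamma\alpha}=\gamma(f_{\beta,\alpha})$; composition $(gf)_{\beta,\alpha}=\sum_\gamma g_{\beta,\gamma}f_{\gamma,\alpha}$. The canonical functor: $Px=x$, $P(f)=(\delta_{\alpha,\beta}\alpha f)_{(\alpha,\beta)}$; $\phi_{\mu,x}=(\delta_{\alpha,\beta\mu}\mathrm{id}_{\alpha x})_{(\alpha,\beta)}\colon Px\to P\mu x$. *)

theory Defs
  imports "HOL-Algebra.Group" "HOL-Library.FuncSet"
begin

text \<open>A k-linear category: objects, hom-sets, composition (Cmp C x y z g f is g after f,
  for f : x -> y and g : y -> z), identities, and on every hom-set a k-module structure
  (addition, zero, scalar multiplication) such that composition is k-bilinear.\<close>

record ('o, 'm, 'k) lcat =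
  Ob    :: "'o set"
  Hom   :: "'o \<Rightarrow> 'o \<Rightarrow> 'm set"
  Cmp   :: "'o \<Rightarrow> 'o \<Rightarrow> 'o \<Rightarrow> 'm \<Rightarrow> 'm \<Rightarrow> 'm"
  Idm   :: "'o \<Rightarrow> 'm"
  Addm  :: "'o \<Rightarrow> 'o \<Rightarrow> 'm \<Rightarrow> 'm \<Rightarrow> 'm"
  Zerom :: "'o \<Rightarrow> 'o \<Rightarrow> 'm"
  Smul  :: "'o \<Rightarrow> 'o \<Rightarrow> 'k \<Rightarrow> 'm \<Rightarrow> 'm"

definition lin_cat :: "('o, 'm, 'k::comm_ring_1) lcat \<Rightarrow> bool" where
  "lin_cat C \<longleftrightarrow>
     (\<forall>x\<in>Ob C. Idm C x \<in> Hom C x x) \<and>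
     (\<forall>x\<in>Ob C. \<forall>y\<in>Ob C. \<forall>z\<in>Ob C. \<forall>f\<in>Hom C x y. \<forall>g\<in>Hom C y z.
         Cmp C x y z g f \<in> Hom C x z) \<and>
     (\<forall>w\<in>Ob C. \<forall>x\<in>Ob C. \<forall>y\<in>Ob C. \<forall>z\<in>Ob C.
        \<forall>f\<in>Hom C w x. \<forall>g\<in>Hom C x y. \<forall>h\<in>Hom C y z.
         Cmp C w y z h (Cmp C w x y g f) = Cmp C w x z (Cmp C x y z h g) f) \<and>
     (\<forall>x\<in>Ob C. \<forall>y\<in>Ob C. \<forall>f\<in>Hom C x y.
         Cmp C x y y (Idm C y) f = f \<and> Cmp C x x y f (Idm C x) = f) \<and>
     (\<forall>x\<in>Ob C. \<forall>y\<in>Ob C.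
        Zerom C x y \<in> Hom C x y \<and>
        (\<forall>f\<in>Hom C x y. \<forall>g\<in>Hom C x y. Addm C x y f g \<in> Hom C x y) \<and>
        (\<forall>a. \<forall>f\<in>Hom C x y. Smul C x y a f \<in> Hom C x y) \<and>
        (\<forall>f\<in>Hom C x y. \<forall>g\<in>Hom C x y. \<forall>h\<in>Hom C x y.
            Addm C x y (Addm C x y f g) h = Addm C x y f (Addm C x y g h)) \<and>
        (\<forall>f\<in>Hom C x y. \<forall>g\<in>Hom C x y. Addm C x y f g = Addm C x y g f) \<and>
        (\<forall>f\<in>Hom C x y. Addm C x y f (Zerom C x y) = f) \<and>
        (\<forall>f\<in>Hom C x y. \<exists>g\<in>Hom C x y. Addm C x y f g = Zerom C x y) \<and>
        (\<forall>a. \<forall>f\<in>Hom C x y. \<forall>g\<in>Hom C x y.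
            Smul C x y a (Addm C x y f g) = Addm C x y (Smul C x y a f) (Smul C x y a g)) \<and>
        (\<forall>a b. \<forall>f\<in>Hom C x y.
            Smul C x y (a + b) f = Addm C x y (Smul C x y a f) (Smul C x y b f)) \<and>
        (\<forall>a b. \<forall>f\<in>Hom C x y. Smul C x y (a * b) f = Smul C x y a (Smul C x y b f)) \<and>
        (\<forall>f\<in>Hom C x y. Smul C x y 1 f = f)) \<and>
     (\<forall>x\<in>Ob C. \<forall>y\<in>Ob C. \<forall>z\<in>Ob C.
        (\<forall>f\<in>Hom C x y. \<forall>g1\<in>Hom C y z. \<forall>g2\<in>Hom C y z.
            Cmp C x y z (Addm C y z g1 g2) f = Addm C x z (Cmp C x y z g1 f) (Cmp C x y z g2 f)) \<and>
        (\<forall>f1\<in>Hom C x y. \<forall>f2\<in>Hom C x y. \<forall>g\<in>Hom C y z.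
            Cmp C x y z g (Addm C x y f1 f2) = Addm C x z (Cmp C x y z g f1) (Cmp C x y z g f2)) \<and>
        (\<forall>a. \<forall>f\<in>Hom C x y. \<forall>g\<in>Hom C y z.
            Cmp C x y z (Smul C y z a g) f = Smul C x z a (Cmp C x y z g f) \<and>
            Cmp C x y z g (Smul C x y a f) = Smul C x z a (Cmp C x y z g f)))"

text \<open>Finite sums in a hom-set (over an arbitrary enumeration of the finite index set S;
  the result does not depend on the enumeration since addition is commutative).\<close>
definition hsum :: "('o, 'm, 'k) lcat \<Rightarrow> 'o \<Rightarrow> 'o \<Rightarrow> 'i set \<Rightarrow> ('i \<Rightarrow> 'm) \<Rightarrow> 'm" where
  "hsum C x y S g =
     foldr (\<lambda>i acc. Addm C x y (g i) acc) (SOME xs. distinct xs \<and> set xs = S) (Zerom C x y)"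

definition lin_functor ::
  "('o1, 'm1, 'k::comm_ring_1) lcat \<Rightarrow> ('o2, 'm2, 'k) lcat \<Rightarrow>
   ('o1 \<Rightarrow> 'o2) \<Rightarrow> ('o1 \<Rightarrow> 'o1 \<Rightarrow> 'm1 \<Rightarrow> 'm2) \<Rightarrow> bool" where
  "lin_functor C D Fo Fm \<longleftrightarrow>
     (\<forall>x\<in>Ob C. Fo x \<in> Ob D) \<and>
     (\<forall>x\<in>Ob C. \<forall>y\<in>Ob C. \<forall>f\<in>Hom C x y. Fm x y f \<in> Hom D (Fo x) (Fo y)) \<and>
     (\<forall>x\<in>Ob C. Fm x x (Idm C x) = Idm D (Fo x)) \<and>
     (\<forall>x\<in>Ob C. \<forall>y\<in>Ob C. \<forall>z\<in>Ob C. \<forall>f\<in>Hom C x y. \<forall>g\<in>Hom C y z.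
        Fm x z (Cmp C x y z g f) = Cmp D (Fo x) (Fo y) (Fo z) (Fm y z g) (Fm x y f)) \<and>
     (\<forall>x\<in>Ob C. \<forall>y\<in>Ob C. \<forall>f\<in>Hom C x y. \<forall>g\<in>Hom C x y.
        Fm x y (Addm C x y f g) = Addm D (Fo x) (Fo y) (Fm x y f) (Fm x y g)) \<and>
     (\<forall>x\<in>Ob C. \<forall>y\<in>Ob C. \<forall>a. \<forall>f\<in>Hom C x y.
        Fm x y (Smul C x y a f) = Smul D (Fo x) (Fo y) a (Fm x y f))"

text \<open>Extensionality conventions: a functor (resp. natural transformation, invariance adjuster)
  is represented by HOL functions which are undefined outside the relevant carriers, so that
  equality of these objects is equality of the mathematical objects.\<close>

definition ext_functor :: "('o1, 'm1, 'k) lcat \<Rightarrow> ('o1 \<Rightarrow> 'o2) \<Rightarrow> ('o1 \<Rightarrow> 'o1 \<Rightarrow> 'm1 \<Rightarrow> 'm2) \<Rightarrow> bool" where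
  "ext_functor C Fo Fm \<longleftrightarrow> Fo \<in> extensional (Ob C) \<and>
     (\<forall>x y. Fm x y \<in> extensional (if x \<in> Ob C \<and> y \<in> Ob C then Hom C x y else {}))"

definition nat_trans ::
  "('o1, 'm1, 'k) lcat \<Rightarrow> ('o2, 'm2, 'k) lcat \<Rightarrow>
   ('o1 \<Rightarrow> 'o2) \<times> ('o1 \<Rightarrow> 'o1 \<Rightarrow> 'm1 \<Rightarrow> 'm2) \<Rightarrow>
   ('o1 \<Rightarrow> 'o2) \<times> ('o1 \<Rightarrow> 'o1 \<Rightarrow> 'm1 \<Rightarrow> 'm2) \<Rightarrow> ('o1 \<Rightarrow> 'm2) \<Rightarrow> bool" where
  "nat_trans C D F F' \<eta> \<longleftrightarrow>
     \<eta> \<in> extensional (Ob C) \<and>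
     (\<forall>x\<in>Ob C. \<eta> x \<in> Hom D (fst F x) (fst F' x)) \<and>
     (\<forall>x\<in>Ob C. \<forall>y\<in>Ob C. \<forall>f\<in>Hom C x y.
        Cmp D (fst F x) (fst F y) (fst F' y) (\<eta> y) (snd F x y f) =
        Cmp D (fst F x) (fst F' x) (fst F' y) (snd F' x y f) (\<eta> x))"

definition gcat ::
  "('o, 'm, 'k::comm_ring_1) lcat \<Rightarrow> 'g monoid \<Rightarrow> ('g \<Rightarrow> 'o \<Rightarrow> 'o) \<Rightarrow>
   ('g \<Rightarrow> 'o \<Rightarrow> 'o \<Rightarrow> 'm \<Rightarrow> 'm) \<Rightarrow> bool" where
  "gcat C G Ao Am \<longleftrightarrow> group G \<and> lin_cat C \<and>
     (\<forall>a\<in>carrier G. lin_functor C C (Ao a) (Am a) \<and>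
        bij_betw (Ao a) (Ob C) (Ob C) \<and>
        (\<forall>x\<in>Ob C. \<forall>y\<in>Ob C. bij_betw (Am a x y) (Hom C x y) (Hom C (Ao a x) (Ao a y)))) \<and>
     (\<forall>x\<in>Ob C. Ao \<one>\<^bsub>G\<^esub> x = x) \<and>
     (\<forall>x\<in>Ob C. \<forall>y\<in>Ob C. \<forall>f\<in>Hom C x y. Am \<one>\<^bsub>G\<^esub> x y f = f) \<and>
     (\<forall>a\<in>carrier G. \<forall>b\<in>carrier G. \<forall>x\<in>Ob C. Ao (b \<otimes>\<^bsub>G\<^esub> a) x = Ao b (Ao a x)) \<and>
     (\<forall>a\<in>carrier G. \<forall>b\<in>carrier G. \<forall>x\<in>Ob C. \<forall>y\<in>Ob C. \<forall>f\<in>Hom C x y.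
        Am (b \<otimes>\<^bsub>G\<^esub> a) x y f = Am b (Ao a x) (Ao a y) (Am a x y f))"

section \<open>The orbit category C/G\<close>

text \<open>A morphism x -> y of C/G is a family f indexed by G x G; the entry f_{b,a} in
  C(a x, b y) is stored as the value f (b, a).  Families are undefined outside
  carrier G x carrier G.\<close>

definition orbit_cat ::
  "('o, 'm, 'k::comm_ring_1) lcat \<Rightarrow> 'g monoid \<Rightarrow> ('g \<Rightarrow> 'o \<Rightarrow> 'o) \<Rightarrow>
   ('g \<Rightarrow> 'o \<Rightarrow> 'o \<Rightarrow> 'm \<Rightarrow> 'm) \<Rightarrow> ('o, 'g \<times> 'g \<Rightarrow> 'm, 'k) lcat" where
  "orbit_cat C G Ao Am =
   \<lparr> Ob = Ob C,
     Hom = (\<lambda>x y. {f. f \<in> extensional (carrier G \<times> carrier G) \<and>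
              (\<forall>b\<in>carrier G. \<forall>a\<in>carrier G. f (b, a) \<in> Hom C (Ao a x) (Ao b y)) \<and>
              (\<forall>c\<in>carrier G. \<forall>b\<in>carrier G. \<forall>a\<in>carrier G.
                  f (c \<otimes>\<^bsub>G\<^esub> b, c \<otimes>\<^bsub>G\<^esub> a) = Am c (Ao a x) (Ao b y) (f (b, a))) \<and>
              (\<forall>b\<in>carrier G. finite {a\<in>carrier G. f (b, a) \<noteq> Zerom C (Ao a x) (Ao b y)}) \<and>
              (\<forall>a\<in>carrier G. finite {b\<in>carrier G. f (b, a) \<noteq> Zerom C (Ao a x) (Ao b y)})}),
     Cmp = (\<lambda>x y z g f. restrict (\<lambda>(b, a).
              hsum C (Ao a x) (Ao b z) {c\<in>carrier G. f (c, a) \<noteq> Zerom C (Ao a x) (Ao c y)}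
                (\<lambda>c. Cmp C (Ao a x) (Ao c y) (Ao b z) (g (b, c)) (f (c, a))))
              (carrier G \<times> carrier G)),
     Idm = (\<lambda>x. restrict (\<lambda>(b, a). if a = b then Idm C (Ao a x) else Zerom C (Ao a x) (Ao b x))
              (carrier G \<times> carrier G)),
     Addm = (\<lambda>x y f g. restrict (\<lambda>(b, a). Addm C (Ao a x) (Ao b y) (f (b, a)) (g (b, a)))
              (carrier G \<times> carrier G)),
     Zerom = (\<lambda>x y. restrict (\<lambda>(b, a). Zerom C (Ao a x) (Ao b y)) (carrier G \<times> carrier G)),
     Smul = (\<lambda>x y k f. restrict (\<lambda>(b, a). Smul C (Ao a x) (Ao b y) k (f (b, a)))
              (carrier G \<times> carrier G)) \<rparr>"

definition canP_mor ::
  "('o, 'm, 'k) lcat \<Rightarrow> 'g monoid \<Rightarrow> ('g \<Rightarrow> 'o \<Rightarrow> 'o) \<Rightarrow> ('g \<Rightarrow> 'o \<Rightarrow> 'o \<Rightarrow> 'm \<Rightarrow> 'm) \<Rightarrow>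
   'o \<Rightarrow> 'o \<Rightarrow> 'm \<Rightarrow> ('g \<times> 'g \<Rightarrow> 'm)" where
  "canP_mor C G Ao Am x y f = restrict (\<lambda>(b, a).
      if a = b then Am a x y f else Zerom C (Ao a x) (Ao b y)) (carrier G \<times> carrier G)"

definition canP_phi ::
  "('o, 'm, 'k) lcat \<Rightarrow> 'g monoid \<Rightarrow> ('g \<Rightarrow> 'o \<Rightarrow> 'o) \<Rightarrow>
   'g \<Rightarrow> 'o \<Rightarrow> ('g \<times> 'g \<Rightarrow> 'm)" where
  "canP_phi C G Ao m x = restrict (\<lambda>(b, a).
      if a = b \<otimes>\<^bsub>G\<^esub> m then Idm C (Ao a x) else Zerom C (Ao a x) (Ao b (Ao m x)))
      (carrier G \<times> carrier G)"

definition Fun_obj :: "('o1, 'm1, 'k::comm_ring_1) lcat \<Rightarrow> ('o2, 'm2, 'k) lcat \<Rightarrow>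
   (('o1 \<Rightarrow> 'o2) \<times> ('o1 \<Rightarrow> 'o1 \<Rightarrow> 'm1 \<Rightarrow> 'm2)) set" where
  "Fun_obj B D = {(Fo, Fm). lin_functor B D Fo Fm \<and> ext_functor B Fo Fm}"

definition Fun_hom :: "('o1, 'm1, 'k) lcat \<Rightarrow> ('o2, 'm2, 'k) lcat \<Rightarrow>
   ('o1 \<Rightarrow> 'o2) \<times> ('o1 \<Rightarrow> 'o1 \<Rightarrow> 'm1 \<Rightarrow> 'm2) \<Rightarrow>
   ('o1 \<Rightarrow> 'o2) \<times> ('o1 \<Rightarrow> 'o1 \<Rightarrow> 'm1 \<Rightarrow> 'm2) \<Rightarrow> ('o1 \<Rightarrow> 'm2) set" where
  "Fun_hom B D F F' = {\<eta>. nat_trans B D F F' \<eta>}"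

definition inv_functor ::
  "('o, 'm, 'k::comm_ring_1) lcat \<Rightarrow> ('o2, 'm2, 'k) lcat \<Rightarrow> 'g monoid \<Rightarrow>
   ('g \<Rightarrow> 'o \<Rightarrow> 'o) \<Rightarrow> ('g \<Rightarrow> 'o \<Rightarrow> 'o \<Rightarrow> 'm \<Rightarrow> 'm) \<Rightarrow>
   ('o \<Rightarrow> 'o2) \<Rightarrow> ('o \<Rightarrow> 'o \<Rightarrow> 'm \<Rightarrow> 'm2) \<Rightarrow> ('g \<Rightarrow> 'o \<Rightarrow> 'm2) \<Rightarrow> bool" where
  "inv_functor C D G Ao Am Fo Fm \<phi> \<longleftrightarrow>
     lin_functor C D Fo Fm \<and>
     \<comment> \<open>each phi_a is a natural transformation F -> F A_a ...\<close>
     (\<forall>a\<in>carrier G. \<forall>x\<in>Ob C. \<phi> a x \<in> Hom D (Fo x) (Fo (Ao a x))) \<and>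
     (\<forall>a\<in>carrier G. \<forall>x\<in>Ob C. \<forall>y\<in>Ob C. \<forall>f\<in>Hom C x y.
        Cmp D (Fo x) (Fo y) (Fo (Ao a y)) (\<phi> a y) (Fm x y f) =
        Cmp D (Fo x) (Fo (Ao a x)) (Fo (Ao a y)) (Fm (Ao a x) (Ao a y) (Am a x y f)) (\<phi> a x)) \<and>
     \<comment> \<open>... which is a natural isomorphism\<close>
     (\<forall>a\<in>carrier G. \<forall>x\<in>Ob C. \<exists>\<psi>\<in>Hom D (Fo (Ao a x)) (Fo x).
        Cmp D (Fo x) (Fo (Ao a x)) (Fo x) \<psi> (\<phi> a x) = Idm D (Fo x) \<and>
        Cmp D (Fo (Ao a x)) (Fo x) (Fo (Ao a x)) (\<phi> a x) \<psi> = Idm D (Fo (Ao a x))) \<and>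
     \<comment> \<open>phi_1 = id\<close>
     (\<forall>x\<in>Ob C. \<phi> \<one>\<^bsub>G\<^esub> x = Idm D (Fo x)) \<and>
     \<comment> \<open>(phi_b A_a) phi_a = phi_{ba}\<close>
     (\<forall>a\<in>carrier G. \<forall>b\<in>carrier G. \<forall>x\<in>Ob C.
        Cmp D (Fo x) (Fo (Ao a x)) (Fo (Ao b (Ao a x))) (\<phi> b (Ao a x)) (\<phi> a x) =
        \<phi> (b \<otimes>\<^bsub>G\<^esub> a) x)"

definition Inv_obj ::
  "('o, 'm, 'k::comm_ring_1) lcat \<Rightarrow> ('o2, 'm2, 'k) lcat \<Rightarrow> 'g monoid \<Rightarrow>
   ('g \<Rightarrow> 'o \<Rightarrow> 'o) \<Rightarrow> ('g \<Rightarrow> 'o \<Rightarrow> 'o \<Rightarrow> 'm \<Rightarrow> 'm) \<Rightarrow>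
   ((('o \<Rightarrow> 'o2) \<times> ('o \<Rightarrow> 'o \<Rightarrow> 'm \<Rightarrow> 'm2)) \<times> ('g \<Rightarrow> 'o \<Rightarrow> 'm2)) set" where
  "Inv_obj C D G Ao Am = {((Fo, Fm), \<phi>). inv_functor C D G Ao Am Fo Fm \<phi> \<and>
      ext_functor C Fo Fm \<and>
      (\<forall>a x. a \<notin> carrier G \<or> x \<notin> Ob C \<longrightarrow> \<phi> a x = undefined)}"

definition Inv_hom ::
  "('o, 'm, 'k) lcat \<Rightarrow> ('o2, 'm2, 'k) lcat \<Rightarrow> 'g monoid \<Rightarrow> ('g \<Rightarrow> 'o \<Rightarrow> 'o) \<Rightarrow>
   (('o \<Rightarrow> 'o2) \<times> ('o \<Rightarrow> 'o \<Rightarrow> 'm \<Rightarrow> 'm2)) \<times> ('g \<Rightarrow> 'o \<Rightarrow> 'm2) \<Rightarrow>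
   (('o \<Rightarrow> 'o2) \<times> ('o \<Rightarrow> 'o \<Rightarrow> 'm \<Rightarrow> 'm2)) \<times> ('g \<Rightarrow> 'o \<Rightarrow> 'm2) \<Rightarrow> ('o \<Rightarrow> 'm2) set" where
  "Inv_hom C D G Ao P P' = {\<eta>. nat_trans C D (fst P) (fst P') \<eta> \<and>
      (\<forall>a\<in>carrier G. \<forall>x\<in>Ob C.
         Cmp D (fst (fst P) x) (fst (fst P) (Ao a x)) (fst (fst P') (Ao a x))
           (\<eta> (Ao a x)) (snd P a x) =
         Cmp D (fst (fst P) x) (fst (fst P') x) (fst (fst P') (Ao a x))
           (snd P' a x) (\<eta> x))}"

definition nt_id :: "('o1, 'm1, 'k) lcat \<Rightarrow> ('o2, 'm2, 'k) lcat \<Rightarrow> ('o1 \<Rightarrow> 'o2) \<Rightarrow> ('o1 \<Rightarrow> 'm2)" where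
  "nt_id B D Fo = restrict (\<lambda>x. Idm D (Fo x)) (Ob B)"

definition nt_comp :: "('o1, 'm1, 'k) lcat \<Rightarrow> ('o2, 'm2, 'k) lcat \<Rightarrow>
   ('o1 \<Rightarrow> 'o2) \<Rightarrow> ('o1 \<Rightarrow> 'o2) \<Rightarrow> ('o1 \<Rightarrow> 'o2) \<Rightarrow> ('o1 \<Rightarrow> 'm2) \<Rightarrow> ('o1 \<Rightarrow> 'm2) \<Rightarrow> ('o1 \<Rightarrow> 'm2)" where
  "nt_comp B D Fo Fo' Fo'' \<eta>' \<eta> = restrict (\<lambda>x. Cmp D (Fo x) (Fo' x) (Fo'' x) (\<eta>' x) (\<eta> x)) (Ob B)"

definition pullback_obj ::
  "('o, 'm, 'k) lcat \<Rightarrow> 'g monoid \<Rightarrow> ('g \<Rightarrow> 'o \<Rightarrow> 'o) \<Rightarrow> ('g \<Rightarrow> 'o \<Rightarrow> 'o \<Rightarrow> 'm \<Rightarrow> 'm) \<Rightarrow>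
   ('o \<Rightarrow> 'o2) \<times> ('o \<Rightarrow> 'o \<Rightarrow> ('g \<times> 'g \<Rightarrow> 'm) \<Rightarrow> 'm2) \<Rightarrow>
   (('o \<Rightarrow> 'o2) \<times> ('o \<Rightarrow> 'o \<Rightarrow> 'm \<Rightarrow> 'm2)) \<times> ('g \<Rightarrow> 'o \<Rightarrow> 'm2)" where
  "pullback_obj C G Ao Am H =
     ((restrict (\<lambda>x. fst H x) (Ob C),
       (\<lambda>x y. if x \<in> Ob C \<and> y \<in> Ob C
              then restrict (\<lambda>f. snd H x y (canP_mor C G Ao Am x y f)) (Hom C x y)
              else (\<lambda>_. undefined))),
      (\<lambda>a x. if a \<in> carrier G \<and> x \<in> Ob C
             then snd H x (Ao a x) (canP_phi C G Ao a x) else undefined))"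

text \<open>On morphisms: eta is sent to eta P (P is the identity on objects).\<close>
definition pullback_mor :: "('o, 'm, 'k) lcat \<Rightarrow> ('o \<Rightarrow> 'm2) \<Rightarrow> ('o \<Rightarrow> 'm2)" where
  "pullback_mor C \<eta> = restrict (\<lambda>x. \<eta> x) (Ob C)"

end

theory Submission
  imports Defs "HOL-Algebra.FiniteProduct"
begin

text \<open>
  The proof rests on one structural fact (\<open>decomp_CG\<close>): every morphism \<open>f : x \<rightarrow> y\<close> of
  \<open>C/G\<close> is the finite sum \<open>\<Sum>\<^sub>\<beta> \<phi>\<^sub>\<beta>\<^sub>\<inverse>,\<^sub>\<beta>\<^sub>y \<circ> P(f\<^sub>\<beta>\<^sub>,\<^sub>1)\<close>.  Consequently a linear functor on \<open>C/G\<close>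
  is determined by its restriction \<open>(H P, H \<phi>)\<close> (injectivity on objects), and a natural
  transformation between restrictions is natural on all of \<open>C/G\<close> (bijectivity on hom-sets).
  Conversely, an invariant functor \<open>(F, \<phi>)\<close> extends to \<open>C/G\<close> by the same formula,
  \<open>f \<mapsto> \<Sum>\<^sub>\<beta> \<phi>\<^sub>\<beta>\<^sub>\<inverse>,\<^sub>\<beta>\<^sub>y \<circ> F(f\<^sub>\<beta>\<^sub>,\<^sub>1)\<close>; functoriality of this extension uses naturality and the cocycle
  identity of \<open>\<phi>\<close> (surjectivity on objects).
\<close>

section \<open>Finite sums of morphisms\<close>

text \<open>A hom-set of a linear category, viewed as a commutative monoid under addition; this
  lets finite sums of morphisms be handled by the library's finite products.\<close>
definition hom_monoid :: "('o, 'm, 'k) lcat \<Rightarrow> 'o \<Rightarrow> 'o \<Rightarrow> 'm monoid" where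
  "hom_monoid D x y = \<lparr>carrier = Hom D x y, mult = Addm D x y, one = Zerom D x y\<rparr>"

definition hsum_list :: "'i set \<Rightarrow> 'i list" where
  "hsum_list S = (SOME xs. distinct xs \<and> set xs = S)"

lemma hsum_foldr: "hsum D x y S g = foldr (\<lambda>i acc. Addm D x y (g i) acc) (hsum_list S) (Zerom D x y)"
  unfolding hsum_def hsum_list_def ..

lemma hsum_list:
  assumes "finite S"
  shows "distinct (hsum_list S)" "set (hsum_list S) = S"
proof -
  obtain xs where "distinct xs \<and> set xs = S" using finite_distinct_list assms by blast
  then have "distinct (hsum_list S) \<and> set (hsum_list S) = S" unfolding hsum_list_def by (rule someI)
  then show "distinct (hsum_list S)" "set (hsum_list S) = S" by auto
qed

lemma hsum_empty[simp]: fixes g :: "'i \<Rightarrow> 'm" shows "hsum D x y {} g = Zerom D x y"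
proof -
  have "(SOME xs. distinct xs \<and> set xs = {}) = ([] :: 'i list)" by (rule some_equality) auto
  then show ?thesis unfolding hsum_def by simp
qed

lemma hsum_cong:
  assumes "finite S" "\<And>i. i \<in> S \<Longrightarrow> g i = g' i"
  shows "hsum D x y S g = hsum D x y S g'"
proof -
  have "\<forall>i\<in>set xs. g i = g' i \<Longrightarrow> foldr (\<lambda>i acc. Addm D x y (g i) acc) xs (Zerom D x y)
          = foldr (\<lambda>i acc. Addm D x y (g' i) acc) xs (Zerom D x y)" for xs
    by (induction xs) auto
  moreover have "\<forall>i\<in>set (hsum_list S). g i = g' i" using assms hsum_list(2)[OF assms(1)] by simp
  ultimately show ?thesis unfolding hsum_foldr by blast
qed

lemma hsum_map:
  assumes "finite S" "\<And>i. i \<in> S \<Longrightarrow> g i \<in> Hom C x y"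
    and zero_closed: "Zerom C x y \<in> Hom C x y"
    and add_closed: "\<And>u v. u \<in> Hom C x y \<Longrightarrow> v \<in> Hom C x y \<Longrightarrow> Addm C x y u v \<in> Hom C x y"
    and map_zero: "h (Zerom C x y) = Zerom D x' y'"
    and map_add: "\<And>u v. u \<in> Hom C x y \<Longrightarrow> v \<in> Hom C x y \<Longrightarrow> h (Addm C x y u v) = Addm D x' y' (h u) (h v)"
  shows "h (hsum C x y S g) = hsum D x' y' S (\<lambda>i. h (g i))"
proof -
  have "\<forall>i\<in>set xs. g i \<in> Hom C x y \<Longrightarrow>
      foldr (\<lambda>i acc. Addm C x y (g i) acc) xs (Zerom C x y) \<in> Hom C x y \<and>
      h (foldr (\<lambda>i acc. Addm C x y (g i) acc) xs (Zerom C x y))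
        = foldr (\<lambda>i acc. Addm D x' y' (h (g i)) acc) xs (Zerom D x' y')" for xs
    by (induction xs) (auto simp: zero_closed add_closed map_zero map_add)
  then show ?thesis using hsum_list[OF assms(1)] assms(2) unfolding hsum_foldr by metis
qed

locale lcat =
  fixes D :: "('o, 'm, 'k::comm_ring_1) lcat"
  assumes lin: "lin_cat D"
begin

lemma idm_hom[intro, simp]: "x \<in> Ob D \<Longrightarrow> Idm D x \<in> Hom D x x"
  using lin unfolding lin_cat_def by auto

lemma cmp_hom[intro, simp]:
  "\<lbrakk>x \<in> Ob D; y \<in> Ob D; z \<in> Ob D; f \<in> Hom D x y; g \<in> Hom D y z\<rbrakk> \<Longrightarrow> Cmp D x y z g f \<in> Hom D x z"
  using lin unfolding lin_cat_def by auto

lemma cmp_assoc: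
  "\<lbrakk>w \<in> Ob D; x \<in> Ob D; y \<in> Ob D; z \<in> Ob D; f \<in> Hom D w x; g \<in> Hom D x y; h \<in> Hom D y z\<rbrakk>
   \<Longrightarrow> Cmp D w y z h (Cmp D w x y g f) = Cmp D w x z (Cmp D x y z h g) f"
  using lin unfolding lin_cat_def by auto

lemma cmp_id_l[simp]: "\<lbrakk>x \<in> Ob D; y \<in> Ob D; f \<in> Hom D x y\<rbrakk> \<Longrightarrow> Cmp D x y y (Idm D y) f = f"
  using lin unfolding lin_cat_def by auto

lemma cmp_id_r[simp]: "\<lbrakk>x \<in> Ob D; y \<in> Ob D; f \<in> Hom D x y\<rbrakk> \<Longrightarrow> Cmp D x x y f (Idm D x) = f"
  using lin unfolding lin_cat_def by auto

lemma zero_hom[intro, simp]: "\<lbrakk>x \<in> Ob D; y \<in> Ob D\<rbrakk> \<Longrightarrow> Zerom D x y \<in> Hom D x y"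
  using lin unfolding lin_cat_def by auto

lemma add_hom[intro, simp]:
  "\<lbrakk>x \<in> Ob D; y \<in> Ob D; f \<in> Hom D x y; g \<in> Hom D x y\<rbrakk> \<Longrightarrow> Addm D x y f g \<in> Hom D x y"
  using lin unfolding lin_cat_def by auto

lemma smul_hom[intro, simp]: "\<lbrakk>x \<in> Ob D; y \<in> Ob D; f \<in> Hom D x y\<rbrakk> \<Longrightarrow> Smul D x y a f \<in> Hom D x y"
  using lin unfolding lin_cat_def by auto

lemma add_assoc:
  "\<lbrakk>x \<in> Ob D; y \<in> Ob D; f \<in> Hom D x y; g \<in> Hom D x y; h \<in> Hom D x y\<rbrakk>
   \<Longrightarrow> Addm D x y (Addm D x y f g) h = Addm D x y f (Addm D x y g h)"
  \<comment> \<open>the simplifier would reorder the sums using commutativity, so project the axiom\<close>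
  using lin[unfolded lin_cat_def, THEN conjunct2, THEN conjunct2, THEN conjunct2, THEN conjunct2,
      THEN conjunct1, rule_format, THEN conjunct2, THEN conjunct2, THEN conjunct2, THEN conjunct1]
  by blast

lemma add_comm: "\<lbrakk>x \<in> Ob D; y \<in> Ob D; f \<in> Hom D x y; g \<in> Hom D x y\<rbrakk> \<Longrightarrow> Addm D x y f g = Addm D x y g f"
  using lin unfolding lin_cat_def by auto

lemma add_zero[simp]: "\<lbrakk>x \<in> Ob D; y \<in> Ob D; f \<in> Hom D x y\<rbrakk> \<Longrightarrow> Addm D x y f (Zerom D x y) = f"
  using lin unfolding lin_cat_def by auto

lemma add_inv: "\<lbrakk>x \<in> Ob D; y \<in> Ob D; f \<in> Hom D x y\<rbrakk> \<Longrightarrow> \<exists>g\<in>Hom D x y. Addm D x y f g = Zerom D x y"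
  using lin unfolding lin_cat_def by blast

lemma smul_add:
  "\<lbrakk>x \<in> Ob D; y \<in> Ob D; f \<in> Hom D x y; g \<in> Hom D x y\<rbrakk>
   \<Longrightarrow> Smul D x y a (Addm D x y f g) = Addm D x y (Smul D x y a f) (Smul D x y a g)"
  using lin unfolding lin_cat_def by auto

lemma cmp_add_l:
  "\<lbrakk>x \<in> Ob D; y \<in> Ob D; z \<in> Ob D; f \<in> Hom D x y; g1 \<in> Hom D y z; g2 \<in> Hom D y z\<rbrakk>
   \<Longrightarrow> Cmp D x y z (Addm D y z g1 g2) f = Addm D x z (Cmp D x y z g1 f) (Cmp D x y z g2 f)"
  using lin unfolding lin_cat_def by auto

lemma cmp_add_r:
  "\<lbrakk>x \<in> Ob D; y \<in> Ob D; z \<in> Ob D; f1 \<in> Hom D x y; f2 \<in> Hom D x y; g \<in> Hom D y z\<rbrakk>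
   \<Longrightarrow> Cmp D x y z g (Addm D x y f1 f2) = Addm D x z (Cmp D x y z g f1) (Cmp D x y z g f2)"
  using lin unfolding lin_cat_def by auto

lemma cmp_smul_r:
  "\<lbrakk>x \<in> Ob D; y \<in> Ob D; z \<in> Ob D; f \<in> Hom D x y; g \<in> Hom D y z\<rbrakk>
   \<Longrightarrow> Cmp D x y z g (Smul D x y a f) = Smul D x z a (Cmp D x y z g f)"
  using lin unfolding lin_cat_def by auto

lemma add_idem_zero:
  assumes "x \<in> Ob D" "y \<in> Ob D" "u \<in> Hom D x y" "Addm D x y u u = u"
  shows "u = Zerom D x y"
proof -
  obtain v where v: "v \<in> Hom D x y" "Addm D x y u v = Zerom D x y" using add_inv assms by blast
  have "Zerom D x y = Addm D x y (Addm D x y u u) v" using assms v by simp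
  also have "\<dots> = Addm D x y u (Addm D x y u v)" by (rule add_assoc) (use assms v in auto)
  also have "\<dots> = u" using assms v by simp
  finally show ?thesis by (rule sym)
qed

lemma cmp_zero_l[simp]:
  "\<lbrakk>x \<in> Ob D; y \<in> Ob D; z \<in> Ob D; f \<in> Hom D x y\<rbrakk> \<Longrightarrow> Cmp D x y z (Zerom D y z) f = Zerom D x z"
  by (rule add_idem_zero) (auto simp: cmp_add_l[symmetric])

lemma cmp_zero_r[simp]:
  "\<lbrakk>x \<in> Ob D; y \<in> Ob D; z \<in> Ob D; g \<in> Hom D y z\<rbrakk> \<Longrightarrow> Cmp D x y z g (Zerom D x y) = Zerom D x z"
  by (rule add_idem_zero) (auto simp: cmp_add_r[symmetric])

lemma smul_zero[simp]: "\<lbrakk>x \<in> Ob D; y \<in> Ob D\<rbrakk> \<Longrightarrow> Smul D x y a (Zerom D x y) = Zerom D x y"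
  by (rule add_idem_zero) (auto simp: smul_add[symmetric])

lemma hom_monoid_simps[simp]:
  "carrier (hom_monoid D x y) = Hom D x y" "mult (hom_monoid D x y) = Addm D x y"
  "one (hom_monoid D x y) = Zerom D x y"
  by (auto simp: hom_monoid_def)

lemma hom_comm_monoid: "\<lbrakk>x \<in> Ob D; y \<in> Ob D\<rbrakk> \<Longrightarrow> comm_monoid (hom_monoid D x y)"
proof (rule comm_monoidI)
  fix a b c assume "x \<in> Ob D" "y \<in> Ob D"
    "a \<in> carrier (hom_monoid D x y)" "b \<in> carrier (hom_monoid D x y)" "c \<in> carrier (hom_monoid D x y)"
  then show "a \<otimes>\<^bsub>hom_monoid D x y\<^esub> b \<otimes>\<^bsub>hom_monoid D x y\<^esub> c
      = a \<otimes>\<^bsub>hom_monoid D x y\<^esub> (b \<otimes>\<^bsub>hom_monoid D x y\<^esub> c)"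
    by (simp add: add_assoc)
qed (auto simp: add_comm)

lemma hsum_finprod:
  assumes "x \<in> Ob D" "y \<in> Ob D" "finite S" "\<forall>i\<in>S. g i \<in> Hom D x y"
  shows "hsum D x y S g = finprod (hom_monoid D x y) g S"
proof -
  interpret M: comm_monoid "hom_monoid D x y" using hom_comm_monoid assms by blast
  have "\<forall>i\<in>set xs. g i \<in> Hom D x y \<Longrightarrow> distinct xs \<Longrightarrow>
      foldr (\<lambda>i acc. Addm D x y (g i) acc) xs (Zerom D x y) = finprod (hom_monoid D x y) g (set xs)" for xs
    by (induction xs) (auto simp: Pi_def)
  then show ?thesis using hsum_list[OF assms(3)] assms(4) by (simp add: hsum_foldr)
qed

lemma hsum_hom[intro, simp]:
  assumes "x \<in> Ob D" "y \<in> Ob D" "finite S" "\<And>i. i\<in>S \<Longrightarrow> g i \<in> Hom D x y"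
  shows "hsum D x y S g \<in> Hom D x y"
proof -
  interpret M: comm_monoid "hom_monoid D x y" using hom_comm_monoid assms by blast
  have "finprod (hom_monoid D x y) g S \<in> carrier (hom_monoid D x y)"
    by (rule M.finprod_closed) (use assms in auto)
  then show ?thesis using assms by (subst hsum_finprod) auto
qed

lemma hsum_zero:
  assumes "x \<in> Ob D" "y \<in> Ob D" "finite S" "\<And>i. i \<in> S \<Longrightarrow> g i = Zerom D x y"
  shows "hsum D x y S g = Zerom D x y"
proof -
  interpret M: comm_monoid "hom_monoid D x y" using hom_comm_monoid assms by blast
  have "finprod (hom_monoid D x y) g S = one (hom_monoid D x y)"
    by (rule M.finprod_one_eqI) (use assms in auto)
  then show ?thesis using assms by (subst hsum_finprod) auto
qed

lemma hsum_single[simp]: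
  assumes "x \<in> Ob D" "y \<in> Ob D" "g i \<in> Hom D x y"
  shows "hsum D x y {i} g = g i"
proof -
  interpret M: comm_monoid "hom_monoid D x y" using hom_comm_monoid assms by blast
  have "finprod (hom_monoid D x y) g (insert i {})
      = g i \<otimes>\<^bsub>hom_monoid D x y\<^esub> finprod (hom_monoid D x y) g {}"
    by (rule M.finprod_insert) (use assms in auto)
  then show ?thesis using assms by (subst hsum_finprod) auto
qed

lemma hsum_neutral:
  assumes "x \<in> Ob D" "y \<in> Ob D" "finite A" "finite B"
    "\<And>i. i \<in> A \<Longrightarrow> g i \<in> Hom D x y" "\<And>i. i \<in> B \<Longrightarrow> h i \<in> Hom D x y"
    "\<And>i. i \<in> B - A \<Longrightarrow> h i = Zerom D x y" "\<And>i. i \<in> A - B \<Longrightarrow> g i = Zerom D x y"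
    "\<And>i. i \<in> A \<inter> B \<Longrightarrow> g i = h i"
  shows "hsum D x y A g = hsum D x y B h"
proof -
  interpret M: comm_monoid "hom_monoid D x y" using hom_comm_monoid assms by blast
  have "finprod (hom_monoid D x y) g A = finprod (hom_monoid D x y) h B"
    by (rule M.finprod_mono_neutral_cong) (use assms in auto)
  then show ?thesis using assms by (simp add: hsum_finprod)
qed

lemma hsum_add:
  assumes "x \<in> Ob D" "y \<in> Ob D" "finite A"
    "\<And>i. i \<in> A \<Longrightarrow> g i \<in> Hom D x y" "\<And>i. i \<in> A \<Longrightarrow> h i \<in> Hom D x y"
  shows "hsum D x y A (\<lambda>i. Addm D x y (g i) (h i)) = Addm D x y (hsum D x y A g) (hsum D x y A h)"
proof -
  interpret M: comm_monoid "hom_monoid D x y" using hom_comm_monoid assms by blast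
  have "finprod (hom_monoid D x y) (\<lambda>i. g i \<otimes>\<^bsub>hom_monoid D x y\<^esub> h i) A
      = finprod (hom_monoid D x y) g A \<otimes>\<^bsub>hom_monoid D x y\<^esub> finprod (hom_monoid D x y) h A"
    by (rule M.finprod_multf) (use assms in auto)
  then show ?thesis using assms by (simp add: hsum_finprod)
qed

lemma hsum_reindex:
  assumes "x \<in> Ob D" "y \<in> Ob D" "finite A" "inj_on k A" "\<And>i. i \<in> k ` A \<Longrightarrow> g i \<in> Hom D x y"
  shows "hsum D x y (k ` A) g = hsum D x y A (\<lambda>i. g (k i))"
proof -
  interpret M: comm_monoid "hom_monoid D x y" using hom_comm_monoid assms by blast
  have "finprod (hom_monoid D x y) g (k ` A) = finprod (hom_monoid D x y) (\<lambda>i. g (k i)) A"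
    by (rule M.finprod_reindex) (use assms in auto)
  then show ?thesis using assms by (simp add: hsum_finprod)
qed

lemma hsum_insert:
  assumes "x \<in> Ob D" "y \<in> Ob D" "finite A" "a \<notin> A" "\<And>i. i \<in> insert a A \<Longrightarrow> g i \<in> Hom D x y"
  shows "hsum D x y (insert a A) g = Addm D x y (g a) (hsum D x y A g)"
proof -
  interpret M: comm_monoid "hom_monoid D x y" using hom_comm_monoid assms by blast
  have "finprod (hom_monoid D x y) g (insert a A)
      = g a \<otimes>\<^bsub>hom_monoid D x y\<^esub> finprod (hom_monoid D x y) g A"
    by (rule M.finprod_insert) (use assms in auto)
  then show ?thesis using assms by (simp add: hsum_finprod)
qed

lemma hsum_swap:
  assumes "x \<in> Ob D" "y \<in> Ob D" "finite A" "finite B"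
    "\<And>i j. i \<in> A \<Longrightarrow> j \<in> B \<Longrightarrow> g i j \<in> Hom D x y"
  shows "hsum D x y A (\<lambda>i. hsum D x y B (g i)) = hsum D x y B (\<lambda>j. hsum D x y A (\<lambda>i. g i j))"
  using assms(3,5)
proof (induction A rule: finite_induct)
  case empty
  then show ?case using assms by (simp add: hsum_zero)
next
  case (insert a A)
  have "hsum D x y (insert a A) (\<lambda>i. hsum D x y B (g i))
      = Addm D x y (hsum D x y B (g a)) (hsum D x y B (\<lambda>j. hsum D x y A (\<lambda>i. g i j)))"
    using insert assms by (subst hsum_insert) auto
  also have "\<dots> = hsum D x y B (\<lambda>j. Addm D x y (g a j) (hsum D x y A (\<lambda>i. g i j)))"
    using insert assms by (subst hsum_add) auto
  also have "\<dots> = hsum D x y B (\<lambda>j. hsum D x y (insert a A) (\<lambda>i. g i j))"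
  proof (rule hsum_cong)
    fix j assume "j \<in> B"
    then show "Addm D x y (g a j) (hsum D x y A (\<lambda>i. g i j)) = hsum D x y (insert a A) (\<lambda>i. g i j)"
      using insert assms by (subst hsum_insert) auto
  qed (use assms in auto)
  finally show ?case .
qed

lemma hsum_cmp_l:
  assumes "x \<in> Ob D" "y \<in> Ob D" "z \<in> Ob D" "finite S" "\<And>i. i \<in> S \<Longrightarrow> g i \<in> Hom D y z" "f \<in> Hom D x y"
  shows "Cmp D x y z (hsum D y z S g) f = hsum D x z S (\<lambda>i. Cmp D x y z (g i) f)"
  by (rule hsum_map[where h="\<lambda>u. Cmp D x y z u f"]) (use assms in \<open>auto simp: cmp_add_l\<close>)

lemma hsum_cmp_r:
  assumes "x \<in> Ob D" "y \<in> Ob D" "z \<in> Ob D" "finite S" "\<And>i. i \<in> S \<Longrightarrow> f i \<in> Hom D x y" "g \<in> Hom D y z"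
  shows "Cmp D x y z g (hsum D x y S f) = hsum D x z S (\<lambda>i. Cmp D x y z g (f i))"
  by (rule hsum_map[where h="\<lambda>u. Cmp D x y z g u"]) (use assms in \<open>auto simp: cmp_add_r\<close>)

lemma hsum_smul:
  assumes "x \<in> Ob D" "y \<in> Ob D" "finite S" "\<And>i. i \<in> S \<Longrightarrow> f i \<in> Hom D x y"
  shows "Smul D x y a (hsum D x y S f) = hsum D x y S (\<lambda>i. Smul D x y a (f i))"
  by (rule hsum_map[where h="\<lambda>u. Smul D x y a u"]) (use assms in \<open>auto simp: smul_add\<close>)

lemma nat_square_paste:
  assumes obs: "x \<in> Ob D" "m \<in> Ob D" "y \<in> Ob D" "x' \<in> Ob D" "m' \<in> Ob D" "y' \<in> Ob D"
    and homs: "u \<in> Hom D x m" "v \<in> Hom D m y" "u' \<in> Hom D x' m'" "v' \<in> Hom D m' y'"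
      "\<theta>x \<in> Hom D x x'" "\<theta>m \<in> Hom D m m'" "\<theta>y \<in> Hom D y y'"
    and sq1: "Cmp D x m m' \<theta>m u = Cmp D x x' m' u' \<theta>x"
    and sq2: "Cmp D m y y' \<theta>y v = Cmp D m m' y' v' \<theta>m"
  shows "Cmp D x y y' \<theta>y (Cmp D x m y v u) = Cmp D x x' y' (Cmp D x' m' y' v' u') \<theta>x"
proof -
  have "Cmp D x y y' \<theta>y (Cmp D x m y v u) = Cmp D x m y' (Cmp D m y y' \<theta>y v) u"
    by (rule cmp_assoc) (use obs homs in auto)
  also have "\<dots> = Cmp D x m y' (Cmp D m m' y' v' \<theta>m) u"
    by (simp only: sq2)
  also have "\<dots> = Cmp D x m' y' v' (Cmp D x m m' \<theta>m u)"
    by (rule cmp_assoc[symmetric]) (use obs homs in auto)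
  also have "\<dots> = Cmp D x m' y' v' (Cmp D x x' m' u' \<theta>x)"
    by (simp only: sq1)
  also have "\<dots> = Cmp D x x' y' (Cmp D x' m' y' v' u') \<theta>x"
    by (rule cmp_assoc) (use obs homs in auto)
  finally show ?thesis .
qed

end

lemma lin_functor_ob: "lin_functor C D Fo Fm \<Longrightarrow> x \<in> Ob C \<Longrightarrow> Fo x \<in> Ob D"
  unfolding lin_functor_def by simp

lemma lin_functor_hom:
  "lin_functor C D Fo Fm \<Longrightarrow> x \<in> Ob C \<Longrightarrow> y \<in> Ob C \<Longrightarrow> f \<in> Hom C x y \<Longrightarrow> Fm x y f \<in> Hom D (Fo x) (Fo y)"
  unfolding lin_functor_def by simp

lemma lin_functor_idm: "lin_functor C D Fo Fm \<Longrightarrow> x \<in> Ob C \<Longrightarrow> Fm x x (Idm C x) = Idm D (Fo x)"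
  unfolding lin_functor_def by simp

lemma lin_functor_cmp:
  "lin_functor C D Fo Fm \<Longrightarrow> x \<in> Ob C \<Longrightarrow> y \<in> Ob C \<Longrightarrow> z \<in> Ob C \<Longrightarrow> f \<in> Hom C x y \<Longrightarrow> g \<in> Hom C y z \<Longrightarrow>
   Fm x z (Cmp C x y z g f) = Cmp D (Fo x) (Fo y) (Fo z) (Fm y z g) (Fm x y f)"
  unfolding lin_functor_def by simp

lemma lin_functor_add:
  "lin_functor C D Fo Fm \<Longrightarrow> x \<in> Ob C \<Longrightarrow> y \<in> Ob C \<Longrightarrow> f \<in> Hom C x y \<Longrightarrow> g \<in> Hom C x y \<Longrightarrow>
   Fm x y (Addm C x y f g) = Addm D (Fo x) (Fo y) (Fm x y f) (Fm x y g)"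
  unfolding lin_functor_def by simp

lemma lin_functor_smul:
  "lin_functor C D Fo Fm \<Longrightarrow> x \<in> Ob C \<Longrightarrow> y \<in> Ob C \<Longrightarrow> f \<in> Hom C x y \<Longrightarrow>
   Fm x y (Smul C x y a f) = Smul D (Fo x) (Fo y) a (Fm x y f)"
  unfolding lin_functor_def by simp

text \<open>Only an
  idempotent zero is required of the source, so this applies to the orbit category before
  (and without) knowing that it is linear.\<close>

lemma additive_map_zero:
  assumes "lin_cat D" "Zerom C x y \<in> Hom C x y" "Addm C x y (Zerom C x y) (Zerom C x y) = Zerom C x y"
    "Fo x \<in> Ob D" "Fo y \<in> Ob D"
    "\<And>f. f \<in> Hom C x y \<Longrightarrow> Fm x y f \<in> Hom D (Fo x) (Fo y)"
    "\<And>f g. f \<in> Hom C x y \<Longrightarrow> g \<in> Hom C x y \<Longrightarrow>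
        Fm x y (Addm C x y f g) = Addm D (Fo x) (Fo y) (Fm x y f) (Fm x y g)"
  shows "Fm x y (Zerom C x y) = Zerom D (Fo x) (Fo y)"
proof -
  interpret D: lcat D by (rule lcat.intro) fact
  show ?thesis
    by (rule D.add_idem_zero) (use assms in \<open>auto simp flip: assms(7)\<close>)
qed

lemma additive_map_hsum:
  assumes "lin_cat D" "Zerom C x y \<in> Hom C x y" "Addm C x y (Zerom C x y) (Zerom C x y) = Zerom C x y"
    "Fo x \<in> Ob D" "Fo y \<in> Ob D"
    "\<And>f. f \<in> Hom C x y \<Longrightarrow> Fm x y f \<in> Hom D (Fo x) (Fo y)"
    "\<And>f g. f \<in> Hom C x y \<Longrightarrow> g \<in> Hom C x y \<Longrightarrow> Addm C x y f g \<in> Hom C x y"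
    "\<And>f g. f \<in> Hom C x y \<Longrightarrow> g \<in> Hom C x y \<Longrightarrow>
        Fm x y (Addm C x y f g) = Addm D (Fo x) (Fo y) (Fm x y f) (Fm x y g)"
    "finite S" "\<And>i. i \<in> S \<Longrightarrow> g i \<in> Hom C x y"
  shows "Fm x y (hsum C x y S g) = hsum D (Fo x) (Fo y) S (\<lambda>i. Fm x y (g i))"
proof -
  have zero: "Fm x y (Zerom C x y) = Zerom D (Fo x) (Fo y)"
    by (rule additive_map_zero[where C=C]) (use assms in auto)
  show ?thesis by (rule hsum_map[where h="Fm x y"]) (use assms zero in auto)
qed

locale gc =
  fixes C :: "('o, 'm, 'k::comm_ring_1) lcat" and G :: "'g monoid"
    and Ao :: "'g \<Rightarrow> 'o \<Rightarrow> 'o" and Am :: "'g \<Rightarrow> 'o \<Rightarrow> 'o \<Rightarrow> 'm \<Rightarrow> 'm"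
  assumes gcat: "gcat C G Ao Am"
begin

sublocale lcat C using gcat unfolding gcat_def by (simp add: lcat.intro)
sublocale G: group G using gcat unfolding gcat_def by simp

lemma Am_functor: "a \<in> carrier G \<Longrightarrow> lin_functor C C (Ao a) (Am a)"
  using gcat unfolding gcat_def by simp

lemma Ao_ob[simp, intro]: "a \<in> carrier G \<Longrightarrow> x \<in> Ob C \<Longrightarrow> Ao a x \<in> Ob C"
  using lin_functor_ob[OF Am_functor] .

lemma Am_hom[simp, intro]:
  "\<lbrakk>a \<in> carrier G; x \<in> Ob C; y \<in> Ob C; f \<in> Hom C x y\<rbrakk> \<Longrightarrow> Am a x y f \<in> Hom C (Ao a x) (Ao a y)"
  using lin_functor_hom[OF Am_functor] .

lemma Am_idm[simp]: "\<lbrakk>a \<in> carrier G; x \<in> Ob C\<rbrakk> \<Longrightarrow> Am a x x (Idm C x) = Idm C (Ao a x)"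
  using lin_functor_idm[OF Am_functor] .

lemma Am_cmp:
  "\<lbrakk>a \<in> carrier G; x \<in> Ob C; y \<in> Ob C; z \<in> Ob C; f \<in> Hom C x y; g \<in> Hom C y z\<rbrakk> \<Longrightarrow>
   Am a x z (Cmp C x y z g f) = Cmp C (Ao a x) (Ao a y) (Ao a z) (Am a y z g) (Am a x y f)"
  using lin_functor_cmp[OF Am_functor] .

lemma Am_add:
  "\<lbrakk>a \<in> carrier G; x \<in> Ob C; y \<in> Ob C; f \<in> Hom C x y; g \<in> Hom C x y\<rbrakk> \<Longrightarrow>
   Am a x y (Addm C x y f g) = Addm C (Ao a x) (Ao a y) (Am a x y f) (Am a x y g)"
  using lin_functor_add[OF Am_functor] .

lemma Am_smul:
  "\<lbrakk>a \<in> carrier G; x \<in> Ob C; y \<in> Ob C; f \<in> Hom C x y\<rbrakk> \<Longrightarrow>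
   Am a x y (Smul C x y k f) = Smul C (Ao a x) (Ao a y) k (Am a x y f)"
  using lin_functor_smul[OF Am_functor] .

lemma Am_zero[simp]:
  "\<lbrakk>a \<in> carrier G; x \<in> Ob C; y \<in> Ob C\<rbrakk> \<Longrightarrow> Am a x y (Zerom C x y) = Zerom C (Ao a x) (Ao a y)"
  by (rule additive_map_zero[where C=C]) (auto simp: Am_add lin)

lemma Ao_one[simp]: "x \<in> Ob C \<Longrightarrow> Ao \<one>\<^bsub>G\<^esub> x = x"
  using gcat unfolding gcat_def by simp

lemma Am_one[simp]: "\<lbrakk>x \<in> Ob C; y \<in> Ob C; f \<in> Hom C x y\<rbrakk> \<Longrightarrow> Am \<one>\<^bsub>G\<^esub> x y f = f"
  using gcat unfolding gcat_def by simp

lemma Ao_mult[simp]: "\<lbrakk>a \<in> carrier G; b \<in> carrier G; x \<in> Ob C\<rbrakk> \<Longrightarrow> Ao (b \<otimes>\<^bsub>G\<^esub> a) x = Ao b (Ao a x)"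
  using gcat unfolding gcat_def by simp

lemma Am_mult[simp]:
  "\<lbrakk>a \<in> carrier G; b \<in> carrier G; x \<in> Ob C; y \<in> Ob C; f \<in> Hom C x y\<rbrakk> \<Longrightarrow>
   Am (b \<otimes>\<^bsub>G\<^esub> a) x y f = Am b (Ao a x) (Ao a y) (Am a x y f)"
  using gcat unfolding gcat_def by simp

lemma Ao_inv[simp]: "\<lbrakk>a \<in> carrier G; x \<in> Ob C\<rbrakk> \<Longrightarrow> Ao (inv\<^bsub>G\<^esub> a) (Ao a x) = x"
  by (metis Ao_mult Ao_one G.inv_closed G.l_inv)

lemma Ao_inv'[simp]: "\<lbrakk>a \<in> carrier G; x \<in> Ob C\<rbrakk> \<Longrightarrow> Ao a (Ao (inv\<^bsub>G\<^esub> a) x) = x"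
  by (metis Ao_mult Ao_one G.inv_closed G.r_inv)

lemma Am_inv[simp]:
  "\<lbrakk>a \<in> carrier G; x \<in> Ob C; y \<in> Ob C; f \<in> Hom C x y\<rbrakk> \<Longrightarrow> Am (inv\<^bsub>G\<^esub> a) (Ao a x) (Ao a y) (Am a x y f) = f"
  by (metis Am_mult Am_one G.inv_closed G.l_inv)

lemma Am_eq_zero:
  "\<lbrakk>a \<in> carrier G; x \<in> Ob C; y \<in> Ob C; f \<in> Hom C x y\<rbrakk> \<Longrightarrow>
   Am a x y f = Zerom C (Ao a x) (Ao a y) \<longleftrightarrow> f = Zerom C x y"
  by (metis Am_inv Am_zero Ao_inv Ao_ob G.inv_closed)

section \<open>The orbit category\<close>

abbreviation CG :: "('o, 'g \<times> 'g \<Rightarrow> 'm, 'k) lcat" where "CG \<equiv> orbit_cat C G Ao Am"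

lemma CG_simps:
  "Ob CG = Ob C"
  "Cmp CG x y z g f = restrict (\<lambda>(b, a).
      hsum C (Ao a x) (Ao b z) {c\<in>carrier G. f (c, a) \<noteq> Zerom C (Ao a x) (Ao c y)}
        (\<lambda>c. Cmp C (Ao a x) (Ao c y) (Ao b z) (g (b, c)) (f (c, a)))) (carrier G \<times> carrier G)"
  "Idm CG x = restrict (\<lambda>(b, a). if a = b then Idm C (Ao a x) else Zerom C (Ao a x) (Ao b x))
      (carrier G \<times> carrier G)"
  "Addm CG x y f g = restrict (\<lambda>(b, a). Addm C (Ao a x) (Ao b y) (f (b, a)) (g (b, a)))
      (carrier G \<times> carrier G)"
  "Zerom CG x y = restrict (\<lambda>(b, a). Zerom C (Ao a x) (Ao b y)) (carrier G \<times> carrier G)"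
  "Smul CG x y k f = restrict (\<lambda>(b, a). Smul C (Ao a x) (Ao b y) k (f (b, a)))
      (carrier G \<times> carrier G)"
  by (simp_all add: orbit_cat_def)

lemma orbit_hom_iff: "f \<in> Hom CG x y \<longleftrightarrow> f \<in> extensional (carrier G \<times> carrier G) \<and>
    (\<forall>b\<in>carrier G. \<forall>a\<in>carrier G. f (b, a) \<in> Hom C (Ao a x) (Ao b y)) \<and>
    (\<forall>c\<in>carrier G. \<forall>b\<in>carrier G. \<forall>a\<in>carrier G.
        f (c \<otimes>\<^bsub>G\<^esub> b, c \<otimes>\<^bsub>G\<^esub> a) = Am c (Ao a x) (Ao b y) (f (b, a))) \<and>
    (\<forall>b\<in>carrier G. finite {a\<in>carrier G. f (b, a) \<noteq> Zerom C (Ao a x) (Ao b y)}) \<and>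
    (\<forall>a\<in>carrier G. finite {b\<in>carrier G. f (b, a) \<noteq> Zerom C (Ao a x) (Ao b y)})"
  by (simp add: orbit_cat_def)

lemma orbit_hom_ext: "f \<in> Hom CG x y \<Longrightarrow> f \<in> extensional (carrier G \<times> carrier G)"
  using orbit_hom_iff by blast

lemma orbit_entry_hom[simp, intro]:
  "f \<in> Hom CG x y \<Longrightarrow> b \<in> carrier G \<Longrightarrow> a \<in> carrier G \<Longrightarrow> f (b, a) \<in> Hom C (Ao a x) (Ao b y)"
  using orbit_hom_iff by blast

lemma orbit_entry_shift:
  "f \<in> Hom CG x y \<Longrightarrow> c \<in> carrier G \<Longrightarrow> b \<in> carrier G \<Longrightarrow> a \<in> carrier G \<Longrightarrow>
   f (c \<otimes>\<^bsub>G\<^esub> b, c \<otimes>\<^bsub>G\<^esub> a) = Am c (Ao a x) (Ao b y) (f (b, a))"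
  using orbit_hom_iff by blast

lemma orbit_row_finite:
  "f \<in> Hom CG x y \<Longrightarrow> b \<in> carrier G \<Longrightarrow> finite {a\<in>carrier G. f (b, a) \<noteq> Zerom C (Ao a x) (Ao b y)}"
  using orbit_hom_iff by blast

lemma orbit_col_finite:
  "f \<in> Hom CG x y \<Longrightarrow> a \<in> carrier G \<Longrightarrow> finite {b\<in>carrier G. f (b, a) \<noteq> Zerom C (Ao a x) (Ao b y)}"
  using orbit_hom_iff by blast

text \<open>By equivariance a morphism of \<open>C/G\<close> is determined by its column at \<open>\<one>\<close>, whose
  entries \<open>f\<^sub>\<beta>\<^sub>,\<^sub>1 : x \<rightarrow> \<beta>y\<close> are finitely many nonzero morphisms of \<open>C\<close>.\<close>

lemma orbit_entry_hom1[simp, intro]: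
  "f \<in> Hom CG x y \<Longrightarrow> x \<in> Ob C \<Longrightarrow> b \<in> carrier G \<Longrightarrow> f (b, \<one>\<^bsub>G\<^esub>) \<in> Hom C x (Ao b y)"
  using orbit_entry_hom[of f x y b "\<one>\<^bsub>G\<^esub>"] by simp

lemma orbit_col1_finite:
  "f \<in> Hom CG x y \<Longrightarrow> x \<in> Ob C \<Longrightarrow> finite {b\<in>carrier G. f (b, \<one>\<^bsub>G\<^esub>) \<noteq> Zerom C x (Ao b y)}"
  using orbit_col_finite[of f x y "\<one>\<^bsub>G\<^esub>"] by simp

lemma orbit_entry_from_col1:
  "f \<in> Hom CG x y \<Longrightarrow> x \<in> Ob C \<Longrightarrow> y \<in> Ob C \<Longrightarrow> b \<in> carrier G \<Longrightarrow> a \<in> carrier G \<Longrightarrow>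
   f (b, a) = Am a x (Ao (inv\<^bsub>G\<^esub> a \<otimes>\<^bsub>G\<^esub> b) y) (f (inv\<^bsub>G\<^esub> a \<otimes>\<^bsub>G\<^esub> b, \<one>\<^bsub>G\<^esub>))"
  using orbit_entry_shift[of f x y a "inv\<^bsub>G\<^esub> a \<otimes>\<^bsub>G\<^esub> b" "\<one>\<^bsub>G\<^esub>"]
  by (simp add: G.m_assoc[symmetric])

lemma orbit_mor_eqI:
  assumes "f \<in> extensional (carrier G \<times> carrier G)" "g \<in> extensional (carrier G \<times> carrier G)"
    "\<And>b a. b \<in> carrier G \<Longrightarrow> a \<in> carrier G \<Longrightarrow> f (b, a) = g (b, a)"
  shows "f = g"
  using assms by (intro extensionalityI[where A="carrier G \<times> carrier G"]) auto

lemma orbit_hom_diagonalI: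
  assumes "f \<in> extensional (carrier G \<times> carrier G)" "m \<in> carrier G"
    and entries: "\<And>b a. b \<in> carrier G \<Longrightarrow> a \<in> carrier G \<Longrightarrow> f (b, a) \<in> Hom C (Ao a x) (Ao b y)"
    and equivariant: "\<And>c b a. c \<in> carrier G \<Longrightarrow> b \<in> carrier G \<Longrightarrow> a \<in> carrier G \<Longrightarrow>
        f (c \<otimes>\<^bsub>G\<^esub> b, c \<otimes>\<^bsub>G\<^esub> a) = Am c (Ao a x) (Ao b y) (f (b, a))"
    and off_diagonal: "\<And>b a. b \<in> carrier G \<Longrightarrow> a \<in> carrier G \<Longrightarrow> a \<noteq> b \<otimes>\<^bsub>G\<^esub> m \<Longrightarrow>
        f (b, a) = Zerom C (Ao a x) (Ao b y)"
  shows "f \<in> Hom CG x y"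
proof -
  have row: "{a\<in>carrier G. f (b, a) \<noteq> Zerom C (Ao a x) (Ao b y)} \<subseteq> {b \<otimes>\<^bsub>G\<^esub> m}"
    if "b \<in> carrier G" for b
    using that off_diagonal by blast
  have col: "{b\<in>carrier G. f (b, a) \<noteq> Zerom C (Ao a x) (Ao b y)} \<subseteq> {a \<otimes>\<^bsub>G\<^esub> inv\<^bsub>G\<^esub> m}"
    if "a \<in> carrier G" for a
  proof
    fix b assume "b \<in> {b\<in>carrier G. f (b, a) \<noteq> Zerom C (Ao a x) (Ao b y)}"
    then have "b \<in> carrier G" "a = b \<otimes>\<^bsub>G\<^esub> m" using that off_diagonal by blast+
    then have "b = a \<otimes>\<^bsub>G\<^esub> inv\<^bsub>G\<^esub> m" using G.inv_solve_right[of b a m] that assms(2) by blast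
    then show "b \<in> {a \<otimes>\<^bsub>G\<^esub> inv\<^bsub>G\<^esub> m}" by simp
  qed
  have "finite {a\<in>carrier G. f (b, a) \<noteq> Zerom C (Ao a x) (Ao b y)}" if "b \<in> carrier G" for b
    using finite_subset[OF row[OF that]] by simp
  moreover have "finite {b\<in>carrier G. f (b, a) \<noteq> Zerom C (Ao a x) (Ao b y)}" if "a \<in> carrier G" for a
    using finite_subset[OF col[OF that]] by simp
  ultimately show ?thesis unfolding orbit_hom_iff using assms(1) entries equivariant by simp
qed

lemma idm_CG_hom[simp, intro]: "x \<in> Ob C \<Longrightarrow> Idm CG x \<in> Hom CG x x"
  by (rule orbit_hom_diagonalI[where m="\<one>\<^bsub>G\<^esub>"]) (auto simp: CG_simps)

lemma zero_CG_hom[simp, intro]: "x \<in> Ob C \<Longrightarrow> y \<in> Ob C \<Longrightarrow> Zerom CG x y \<in> Hom CG x y"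
  by (auto simp: orbit_hom_iff CG_simps simp flip: Ao_mult)

lemma zero_CG_idem: "x \<in> Ob C \<Longrightarrow> y \<in> Ob C \<Longrightarrow> Addm CG x y (Zerom CG x y) (Zerom CG x y) = Zerom CG x y"
  by (auto simp: CG_simps intro!: restrict_ext)

text \<open>Entrywise operations: the support of a sum (resp. scalar multiple) lies in the union
  of the supports (resp. in the support) of the operands.\<close>

lemma add_CG_hom[simp, intro]:
  assumes "x \<in> Ob C" "y \<in> Ob C" "f \<in> Hom CG x y" "g \<in> Hom CG x y"
  shows "Addm CG x y f g \<in> Hom CG x y"
proof -
  let ?nz = "\<lambda>h b a. h (b, a) \<noteq> Zerom C (Ao a x) (Ao b y)"
  have supp: "?nz (Addm CG x y f g) b a \<Longrightarrow> ?nz f b a \<or> ?nz g b a"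
    if "b \<in> carrier G" "a \<in> carrier G" for b a
    using that assms by (auto simp: CG_simps)
  have "finite {a \<in> carrier G. ?nz (Addm CG x y f g) b a}" if "b \<in> carrier G" for b
    by (rule finite_subset[OF _ finite_UnI[OF orbit_row_finite[OF assms(3) that]
          orbit_row_finite[OF assms(4) that]]]) (use supp that in blast)
  moreover have "finite {b \<in> carrier G. ?nz (Addm CG x y f g) b a}" if "a \<in> carrier G" for a
    by (rule finite_subset[OF _ finite_UnI[OF orbit_col_finite[OF assms(3) that]
          orbit_col_finite[OF assms(4) that]]]) (use supp that in blast)
  moreover have "Addm CG x y f g (b, a) \<in> Hom C (Ao a x) (Ao b y)"
    if "b \<in> carrier G" "a \<in> carrier G" for b a
    using that assms by (simp add: CG_simps)
  moreover have "Addm CG x y f g (c \<otimes>\<^bsub>G\<^esub> b, c \<otimes>\<^bsub>G\<^esub> a) = Am c (Ao a x) (Ao b y) (Addm CG x y f g (b, a))"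
    if "c \<in> carrier G" "b \<in> carrier G" "a \<in> carrier G" for c b a
    using that assms by (simp add: CG_simps orbit_entry_shift Am_add)
  ultimately show ?thesis unfolding orbit_hom_iff by (simp add: CG_simps)
qed

lemma smul_CG_hom[simp, intro]:
  assumes "x \<in> Ob C" "y \<in> Ob C" "f \<in> Hom CG x y"
  shows "Smul CG x y k f \<in> Hom CG x y"
proof -
  let ?nz = "\<lambda>h b a. h (b, a) \<noteq> Zerom C (Ao a x) (Ao b y)"
  have supp: "?nz (Smul CG x y k f) b a \<Longrightarrow> ?nz f b a" if "b \<in> carrier G" "a \<in> carrier G" for b a
    using that assms by (auto simp: CG_simps)
  have "finite {a \<in> carrier G. ?nz (Smul CG x y k f) b a}" if "b \<in> carrier G" for b
    by (rule finite_subset[OF _ orbit_row_finite[OF assms(3) that]]) (use supp that in blast)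
  moreover have "finite {b \<in> carrier G. ?nz (Smul CG x y k f) b a}" if "a \<in> carrier G" for a
    by (rule finite_subset[OF _ orbit_col_finite[OF assms(3) that]]) (use supp that in blast)
  moreover have "Smul CG x y k f (b, a) \<in> Hom C (Ao a x) (Ao b y)"
    if "b \<in> carrier G" "a \<in> carrier G" for b a
    using that assms by (simp add: CG_simps)
  moreover have "Smul CG x y k f (c \<otimes>\<^bsub>G\<^esub> b, c \<otimes>\<^bsub>G\<^esub> a) = Am c (Ao a x) (Ao b y) (Smul CG x y k f (b, a))"
    if "c \<in> carrier G" "b \<in> carrier G" "a \<in> carrier G" for c b a
    using that assms by (simp add: CG_simps orbit_entry_shift Am_smul)
  ultimately show ?thesis unfolding orbit_hom_iff by (simp add: CG_simps)
qed

lemma hsum_CG_eval: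
  assumes "b \<in> carrier G" "a \<in> carrier G"
  shows "hsum CG x y S g (b, a) = hsum C (Ao a x) (Ao b y) S (\<lambda>i. g i (b, a))"
proof -
  have "foldr (\<lambda>i acc. Addm CG x y (g i) acc) xs (Zerom CG x y) (b, a) =
        foldr (\<lambda>i acc. Addm C (Ao a x) (Ao b y) (g i (b, a)) acc) xs (Zerom C (Ao a x) (Ao b y))" for xs
    using assms by (induction xs) (simp_all add: CG_simps)
  then show ?thesis by (simp add: hsum_foldr)
qed

lemma hsum_CG_hom[simp, intro]:
  assumes "x \<in> Ob C" "y \<in> Ob C" "finite S" "\<And>i. i \<in> S \<Longrightarrow> g i \<in> Hom CG x y"
  shows "hsum CG x y S g \<in> Hom CG x y"
proof -
  have "\<forall>i\<in>set xs. g i \<in> Hom CG x y \<Longrightarrow>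
      foldr (\<lambda>i acc. Addm CG x y (g i) acc) xs (Zerom CG x y) \<in> Hom CG x y" for xs
    using assms(1,2) by (induction xs) auto
  then show ?thesis using assms hsum_list[OF assms(3)] by (simp add: hsum_foldr)
qed

lemma cmpCG_eval:
  "b \<in> carrier G \<Longrightarrow> a \<in> carrier G \<Longrightarrow>
   Cmp CG x y z g f (b, a) = hsum C (Ao a x) (Ao b z) {c\<in>carrier G. f (c, a) \<noteq> Zerom C (Ao a x) (Ao c y)}
     (\<lambda>c. Cmp C (Ao a x) (Ao c y) (Ao b z) (g (b, c)) (f (c, a)))"
  by (simp add: CG_simps)

lemma cmpCG_ext: "Cmp CG x y z g f \<in> extensional (carrier G \<times> carrier G)"
  by (simp add: CG_simps)

lemma cmpCG_nonzero:
  assumes "x \<in> Ob C" "y \<in> Ob C" "z \<in> Ob C" "f \<in> Hom CG x y" "g \<in> Hom CG y z"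
    "b \<in> carrier G" "a \<in> carrier G" "Cmp CG x y z g f (b, a) \<noteq> Zerom C (Ao a x) (Ao b z)"
  shows "\<exists>c\<in>carrier G. f (c, a) \<noteq> Zerom C (Ao a x) (Ao c y) \<and> g (b, c) \<noteq> Zerom C (Ao c y) (Ao b z)"
proof (rule ccontr)
  assume "\<not> ?thesis"
  then have "Cmp CG x y z g f (b, a) = Zerom C (Ao a x) (Ao b z)"
    using assms by (subst cmpCG_eval) (auto intro!: hsum_zero orbit_col_finite)
  then show False using assms by blast
qed

lemma cmpCG_eval_single:
  assumes "x \<in> Ob C" "y \<in> Ob C" "z \<in> Ob C" "f \<in> Hom CG x y" "g \<in> Hom CG y z" "b \<in> carrier G"
    "a \<in> carrier G" "c0 \<in> carrier G" "\<And>c. c \<in> carrier G \<Longrightarrow> c \<noteq> c0 \<Longrightarrow> f (c, a) = Zerom C (Ao a x) (Ao c y)"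
  shows "Cmp CG x y z g f (b, a) = Cmp C (Ao a x) (Ao c0 y) (Ao b z) (g (b, c0)) (f (c0, a))"
proof -
  have "hsum C (Ao a x) (Ao b z) {c\<in>carrier G. f (c, a) \<noteq> Zerom C (Ao a x) (Ao c y)}
          (\<lambda>c. Cmp C (Ao a x) (Ao c y) (Ao b z) (g (b, c)) (f (c, a)))
      = hsum C (Ao a x) (Ao b z) {c0} (\<lambda>c. Cmp C (Ao a x) (Ao c y) (Ao b z) (g (b, c)) (f (c, a)))"
    by (rule hsum_neutral) (use assms orbit_col_finite[OF assms(4,7)] in auto)
  then show ?thesis using assms by (simp add: cmpCG_eval)
qed

lemma orbit_col_support_shift:
  assumes x: "x \<in> Ob C" and y: "y \<in> Ob C" and f: "f \<in> Hom CG x y"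
    and d: "d \<in> carrier G" and a: "a \<in> carrier G"
  shows "{c\<in>carrier G. f (c, d \<otimes>\<^bsub>G\<^esub> a) \<noteq> Zerom C (Ao (d \<otimes>\<^bsub>G\<^esub> a) x) (Ao c y)}
       = (\<lambda>c. d \<otimes>\<^bsub>G\<^esub> c) ` {c\<in>carrier G. f (c, a) \<noteq> Zerom C (Ao a x) (Ao c y)}"
proof (rule equalityI; rule subsetI)
  fix e assume e: "e \<in> {c\<in>carrier G. f (c, d \<otimes>\<^bsub>G\<^esub> a) \<noteq> Zerom C (Ao (d \<otimes>\<^bsub>G\<^esub> a) x) (Ao c y)}"
  define c where "c = inv\<^bsub>G\<^esub> d \<otimes>\<^bsub>G\<^esub> e"
  have c: "c \<in> carrier G" "e = d \<otimes>\<^bsub>G\<^esub> c" using d e by (auto simp: c_def G.m_assoc[symmetric])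
  have "f (c, a) \<noteq> Zerom C (Ao a x) (Ao c y)"
    using orbit_entry_shift[OF f d c(1) a] e c d a x y f by (auto simp: Am_eq_zero)
  then show "e \<in> (\<lambda>c. d \<otimes>\<^bsub>G\<^esub> c) ` {c\<in>carrier G. f (c, a) \<noteq> Zerom C (Ao a x) (Ao c y)}"
    using c by blast
next
  fix e assume "e \<in> (\<lambda>c. d \<otimes>\<^bsub>G\<^esub> c) ` {c\<in>carrier G. f (c, a) \<noteq> Zerom C (Ao a x) (Ao c y)}"
  then obtain c where c: "c \<in> carrier G" "f (c, a) \<noteq> Zerom C (Ao a x) (Ao c y)" "e = d \<otimes>\<^bsub>G\<^esub> c"
    by blast
  then show "e \<in> {c\<in>carrier G. f (c, d \<otimes>\<^bsub>G\<^esub> a) \<noteq> Zerom C (Ao (d \<otimes>\<^bsub>G\<^esub> a) x) (Ao c y)}"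
    using orbit_entry_shift[OF f d c(1) a] d a x y f by (auto simp: Am_eq_zero)
qed

text \<open>Equivariance of the composite: the entries of \<open>g f\<close> transform like those of
  \<open>f\<close> and \<open>g\<close>, because \<open>A\<^sub>d\<close> is linear and the summation index can be translated.\<close>
lemma cmpCG_shift:
  assumes x: "x \<in> Ob C" and y: "y \<in> Ob C" and z: "z \<in> Ob C"
    and f: "f \<in> Hom CG x y" and g: "g \<in> Hom CG y z"
    and d: "d \<in> carrier G" and b: "b \<in> carrier G" and a: "a \<in> carrier G"
  shows "Cmp CG x y z g f (d \<otimes>\<^bsub>G\<^esub> b, d \<otimes>\<^bsub>G\<^esub> a) = Am d (Ao a x) (Ao b z) (Cmp CG x y z g f (b, a))"
proof -
  let ?S = "{c\<in>carrier G. f (c, a) \<noteq> Zerom C (Ao a x) (Ao c y)}"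
  let ?t = "\<lambda>c. Cmp C (Ao a x) (Ao c y) (Ao b z) (g (b, c)) (f (c, a))"
  have fin: "finite ?S" using orbit_col_finite[OF f a] .
  have "Cmp CG x y z g f (d \<otimes>\<^bsub>G\<^esub> b, d \<otimes>\<^bsub>G\<^esub> a) =
     hsum C (Ao d (Ao a x)) (Ao d (Ao b z)) ((\<lambda>c. d \<otimes>\<^bsub>G\<^esub> c) ` ?S)
       (\<lambda>e. Cmp C (Ao d (Ao a x)) (Ao e y) (Ao d (Ao b z)) (g (d \<otimes>\<^bsub>G\<^esub> b, e)) (f (e, d \<otimes>\<^bsub>G\<^esub> a)))"
    using d b a x z by (subst cmpCG_eval) (simp_all add: orbit_col_support_shift[OF x y f d a, symmetric])
  also have "\<dots> = hsum C (Ao d (Ao a x)) (Ao d (Ao b z)) ?S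
       (\<lambda>c. Cmp C (Ao d (Ao a x)) (Ao (d \<otimes>\<^bsub>G\<^esub> c) y) (Ao d (Ao b z))
              (g (d \<otimes>\<^bsub>G\<^esub> b, d \<otimes>\<^bsub>G\<^esub> c)) (f (d \<otimes>\<^bsub>G\<^esub> c, d \<otimes>\<^bsub>G\<^esub> a)))"
  proof (rule hsum_reindex)
    show "inj_on (\<lambda>c. d \<otimes>\<^bsub>G\<^esub> c) ?S" using d by (auto simp: inj_on_def)
    fix e assume "e \<in> (\<lambda>c. d \<otimes>\<^bsub>G\<^esub> c) ` ?S"
    then obtain c where c: "c \<in> carrier G" "e = d \<otimes>\<^bsub>G\<^esub> c" by blast
    have "g (d \<otimes>\<^bsub>G\<^esub> b, e) \<in> Hom C (Ao e y) (Ao (d \<otimes>\<^bsub>G\<^esub> b) z)"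
      "f (e, d \<otimes>\<^bsub>G\<^esub> a) \<in> Hom C (Ao (d \<otimes>\<^bsub>G\<^esub> a) x) (Ao e y)"
      using c d b a f g by auto
    then show "Cmp C (Ao d (Ao a x)) (Ao e y) (Ao d (Ao b z)) (g (d \<otimes>\<^bsub>G\<^esub> b, e)) (f (e, d \<otimes>\<^bsub>G\<^esub> a))
        \<in> Hom C (Ao d (Ao a x)) (Ao d (Ao b z))"
      using c d b a x y z by (intro cmp_hom) auto
  qed (use d b a x z fin in auto)
  also have "\<dots> = hsum C (Ao d (Ao a x)) (Ao d (Ao b z)) ?S (\<lambda>c. Am d (Ao a x) (Ao b z) (?t c))"
    using d b a x y z f g fin by (intro hsum_cong) (auto simp: orbit_entry_shift Am_cmp)
  also have "\<dots> = Am d (Ao a x) (Ao b z) (hsum C (Ao a x) (Ao b z) ?S ?t)"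
    using d b a x y z f g fin by (intro hsum_map[symmetric]) (auto simp: Am_add)
  also have "\<dots> = Am d (Ao a x) (Ao b z) (Cmp CG x y z g f (b, a))"
    using b a by (simp add: cmpCG_eval)
  finally show ?thesis .
qed

lemma cmp_CG_hom[simp, intro]:
  assumes x: "x \<in> Ob C" and y: "y \<in> Ob C" and z: "z \<in> Ob C"
    and f: "f \<in> Hom CG x y" and g: "g \<in> Hom CG y z"
  shows "Cmp CG x y z g f \<in> Hom CG x z"
proof -
  have row: "finite {a \<in> carrier G. Cmp CG x y z g f (b, a) \<noteq> Zerom C (Ao a x) (Ao b z)}"
    if b: "b \<in> carrier G" for b
  proof (rule finite_subset)
    show "{a \<in> carrier G. Cmp CG x y z g f (b, a) \<noteq> Zerom C (Ao a x) (Ao b z)} \<subseteq>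
        (\<Union>c\<in>{c\<in>carrier G. g (b, c) \<noteq> Zerom C (Ao c y) (Ao b z)}.
           {a\<in>carrier G. f (c, a) \<noteq> Zerom C (Ao a x) (Ao c y)})"
      using cmpCG_nonzero[OF x y z f g b] by blast
    show "finite \<dots>" using orbit_row_finite[OF g b] orbit_row_finite[OF f] by blast
  qed
  have col: "finite {b \<in> carrier G. Cmp CG x y z g f (b, a) \<noteq> Zerom C (Ao a x) (Ao b z)}"
    if a: "a \<in> carrier G" for a
  proof (rule finite_subset)
    show "{b \<in> carrier G. Cmp CG x y z g f (b, a) \<noteq> Zerom C (Ao a x) (Ao b z)} \<subseteq>
        (\<Union>c\<in>{c\<in>carrier G. f (c, a) \<noteq> Zerom C (Ao a x) (Ao c y)}.
           {b\<in>carrier G. g (b, c) \<noteq> Zerom C (Ao c y) (Ao b z)})"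
      using cmpCG_nonzero[OF x y z f g _ a] by blast
    show "finite \<dots>" using orbit_col_finite[OF f a] orbit_col_finite[OF g] by blast
  qed
  have "Cmp CG x y z g f (b, a) \<in> Hom C (Ao a x) (Ao b z)" if "b \<in> carrier G" "a \<in> carrier G" for b a
    using assms that by (subst cmpCG_eval) (auto intro!: hsum_hom orbit_col_finite)
  then show ?thesis
    unfolding orbit_hom_iff using cmpCG_ext cmpCG_shift[OF assms] row col by simp
qed

lemma canP_eval:
  "b \<in> carrier G \<Longrightarrow> a \<in> carrier G \<Longrightarrow>
   canP_mor C G Ao Am x y f (b, a) = (if a = b then Am a x y f else Zerom C (Ao a x) (Ao b y))"
  by (simp add: canP_mor_def)

lemma canPphi_eval:
  "b \<in> carrier G \<Longrightarrow> a \<in> carrier G \<Longrightarrow>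
   canP_phi C G Ao m x (b, a) =
     (if a = b \<otimes>\<^bsub>G\<^esub> m then Idm C (Ao a x) else Zerom C (Ao a x) (Ao b (Ao m x)))"
  by (simp add: canP_phi_def)

lemma canP_ext: "canP_mor C G Ao Am x y f \<in> extensional (carrier G \<times> carrier G)"
  by (simp add: canP_mor_def)

lemma canPphi_ext: "canP_phi C G Ao m x \<in> extensional (carrier G \<times> carrier G)"
  by (simp add: canP_phi_def)

lemma canP_hom[simp, intro]:
  assumes "x \<in> Ob C" "y \<in> Ob C" "f \<in> Hom C x y"
  shows "canP_mor C G Ao Am x y f \<in> Hom CG x y"
  by (rule orbit_hom_diagonalI[where m="\<one>\<^bsub>G\<^esub>"]) (use assms in \<open>auto simp: canP_ext canP_eval\<close>)

lemma canPphi_hom[simp, intro]: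
  assumes "x \<in> Ob C" "m \<in> carrier G"
  shows "canP_phi C G Ao m x \<in> Hom CG x (Ao m x)"
  by (rule orbit_hom_diagonalI[where m=m]) (use assms in \<open>auto simp: canPphi_ext canPphi_eval G.m_assoc\<close>)

lemma canP_cmp:
  assumes "x \<in> Ob C" "y \<in> Ob C" "z \<in> Ob C" "f \<in> Hom C x y" "g \<in> Hom C y z"
  shows "Cmp CG x y z (canP_mor C G Ao Am y z g) (canP_mor C G Ao Am x y f)
       = canP_mor C G Ao Am x z (Cmp C x y z g f)"
proof (rule orbit_mor_eqI[OF cmpCG_ext canP_ext])
  fix b a assume b: "b \<in> carrier G" and a: "a \<in> carrier G"
  have "Cmp CG x y z (canP_mor C G Ao Am y z g) (canP_mor C G Ao Am x y f) (b, a) =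
     Cmp C (Ao a x) (Ao a y) (Ao b z) (canP_mor C G Ao Am y z g (b, a)) (canP_mor C G Ao Am x y f (a, a))"
    using assms a b by (intro cmpCG_eval_single) (auto simp: canP_eval)
  then show "Cmp CG x y z (canP_mor C G Ao Am y z g) (canP_mor C G Ao Am x y f) (b, a)
      = canP_mor C G Ao Am x z (Cmp C x y z g f) (b, a)"
    using assms a b by (auto simp: canP_eval Am_cmp)
qed

lemma canP_idm: "x \<in> Ob C \<Longrightarrow> canP_mor C G Ao Am x x (Idm C x) = Idm CG x"
  by (rule orbit_mor_eqI[OF canP_ext]) (auto simp: canP_eval CG_simps)

lemma canP_add:
  assumes "x \<in> Ob C" "y \<in> Ob C" "f \<in> Hom C x y" "g \<in> Hom C x y"
  shows "canP_mor C G Ao Am x y (Addm C x y f g)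
       = Addm CG x y (canP_mor C G Ao Am x y f) (canP_mor C G Ao Am x y g)"
  by (rule orbit_mor_eqI[OF canP_ext]) (use assms in \<open>auto simp: canP_eval CG_simps Am_add\<close>)

lemma canP_smul:
  assumes "x \<in> Ob C" "y \<in> Ob C" "f \<in> Hom C x y"
  shows "canP_mor C G Ao Am x y (Smul C x y k f) = Smul CG x y k (canP_mor C G Ao Am x y f)"
  by (rule orbit_mor_eqI[OF canP_ext]) (use assms in \<open>auto simp: canP_eval CG_simps Am_smul\<close>)

text \<open>\<open>\<phi>\<close> is an invariance adjuster of \<open>P\<close>: natural, \<open>\<phi>\<^sub>1 = id\<close>, and
  \<open>(\<phi>\<^sub>b A\<^sub>a) \<phi>\<^sub>a = \<phi>\<^sub>b\<^sub>a\<close> (which also makes each \<open>\<phi>\<^sub>a\<close> invertible).\<close>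

lemma phi_nat_CG:
  assumes x: "x \<in> Ob C" and y: "y \<in> Ob C" and f: "f \<in> Hom C x y" and m: "m \<in> carrier G"
  shows "Cmp CG x y (Ao m y) (canP_phi C G Ao m y) (canP_mor C G Ao Am x y f) =
         Cmp CG x (Ao m x) (Ao m y) (canP_mor C G Ao Am (Ao m x) (Ao m y) (Am m x y f)) (canP_phi C G Ao m x)"
proof (rule orbit_mor_eqI[OF cmpCG_ext cmpCG_ext])
  fix b d assume b: "b \<in> carrier G" and d: "d \<in> carrier G"
  have dm: "d \<otimes>\<^bsub>G\<^esub> inv\<^bsub>G\<^esub> m \<in> carrier G" using d m by simp
  have L: "Cmp CG x y (Ao m y) (canP_phi C G Ao m y) (canP_mor C G Ao Am x y f) (b, d) =
     Cmp C (Ao d x) (Ao d y) (Ao b (Ao m y)) (canP_phi C G Ao m y (b, d)) (canP_mor C G Ao Am x y f (d, d))"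
    using assms b d by (intro cmpCG_eval_single) (auto simp: canP_eval)
  have R: "Cmp CG x (Ao m x) (Ao m y) (canP_mor C G Ao Am (Ao m x) (Ao m y) (Am m x y f)) (canP_phi C G Ao m x) (b, d) =
     Cmp C (Ao d x) (Ao (d \<otimes>\<^bsub>G\<^esub> inv\<^bsub>G\<^esub> m) (Ao m x)) (Ao b (Ao m y))
        (canP_mor C G Ao Am (Ao m x) (Ao m y) (Am m x y f) (b, d \<otimes>\<^bsub>G\<^esub> inv\<^bsub>G\<^esub> m))
        (canP_phi C G Ao m x (d \<otimes>\<^bsub>G\<^esub> inv\<^bsub>G\<^esub> m, d))"
    using assms b d dm by (intro cmpCG_eval_single) (auto simp: canPphi_eval G.inv_solve_right)
  show "Cmp CG x y (Ao m y) (canP_phi C G Ao m y) (canP_mor C G Ao Am x y f) (b, d) =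
        Cmp CG x (Ao m x) (Ao m y) (canP_mor C G Ao Am (Ao m x) (Ao m y) (Am m x y f)) (canP_phi C G Ao m x) (b, d)"
  proof (cases "d = b \<otimes>\<^bsub>G\<^esub> m")
    case True
    have "b \<otimes>\<^bsub>G\<^esub> m \<otimes>\<^bsub>G\<^esub> inv\<^bsub>G\<^esub> m = b" using b m by (simp add: G.m_assoc)
    then show ?thesis unfolding L R using True assms b by (simp add: canP_eval canPphi_eval)
  next
    case False
    then show ?thesis unfolding L R using assms b d dm
      by (simp add: canP_eval canPphi_eval G.inv_solve_right' G.m_assoc)
  qed
qed

lemma phi_comp_CG:
  assumes x: "x \<in> Ob C" and a: "a \<in> carrier G" and b: "b \<in> carrier G"
  shows "Cmp CG x (Ao a x) (Ao b (Ao a x)) (canP_phi C G Ao b (Ao a x)) (canP_phi C G Ao a x)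
       = canP_phi C G Ao (b \<otimes>\<^bsub>G\<^esub> a) x"
proof (rule orbit_mor_eqI[OF cmpCG_ext canPphi_ext])
  fix d e assume d: "d \<in> carrier G" and e: "e \<in> carrier G"
  have ea: "e \<otimes>\<^bsub>G\<^esub> inv\<^bsub>G\<^esub> a \<in> carrier G" using e a by simp
  have R: "Cmp CG x (Ao a x) (Ao b (Ao a x)) (canP_phi C G Ao b (Ao a x)) (canP_phi C G Ao a x) (d, e) =
     Cmp C (Ao e x) (Ao (e \<otimes>\<^bsub>G\<^esub> inv\<^bsub>G\<^esub> a) (Ao a x)) (Ao d (Ao b (Ao a x)))
        (canP_phi C G Ao b (Ao a x) (d, e \<otimes>\<^bsub>G\<^esub> inv\<^bsub>G\<^esub> a)) (canP_phi C G Ao a x (e \<otimes>\<^bsub>G\<^esub> inv\<^bsub>G\<^esub> a, e))"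
    using assms d e ea by (intro cmpCG_eval_single) (auto simp: canPphi_eval G.inv_solve_right)
  show "Cmp CG x (Ao a x) (Ao b (Ao a x)) (canP_phi C G Ao b (Ao a x)) (canP_phi C G Ao a x) (d, e) =
        canP_phi C G Ao (b \<otimes>\<^bsub>G\<^esub> a) x (d, e)"
    unfolding R using assms d e ea by (auto simp: canPphi_eval G.inv_solve_right' G.m_assoc)
qed

lemma phi_one_CG: "x \<in> Ob C \<Longrightarrow> canP_phi C G Ao \<one>\<^bsub>G\<^esub> x = Idm CG x"
  by (rule orbit_mor_eqI[OF canPphi_ext]) (auto simp: canPphi_eval CG_simps)

section \<open>Every morphism of \<open>C/G\<close> is built from \<open>P\<close> and \<open>\<phi>\<close>\<close>

abbreviation col1_support :: "('g \<times> 'g \<Rightarrow> 'm) \<Rightarrow> 'o \<Rightarrow> 'o \<Rightarrow> 'g set" where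
  "col1_support f x y \<equiv> {\<beta>\<in>carrier G. f (\<beta>, \<one>\<^bsub>G\<^esub>) \<noteq> Zerom C x (Ao \<beta> y)}"

lemma phi_back_hom[simp, intro]:
  "y \<in> Ob C \<Longrightarrow> \<beta> \<in> carrier G \<Longrightarrow> canP_phi C G Ao (inv\<^bsub>G\<^esub> \<beta>) (Ao \<beta> y) \<in> Hom CG (Ao \<beta> y) y"
  using canPphi_hom[of "Ao \<beta> y" "inv\<^bsub>G\<^esub> \<beta>"] by simp

lemma decomp_summand_eval:
  assumes x: "x \<in> Ob C" and y: "y \<in> Ob C" and be: "\<beta> \<in> carrier G" and h: "h \<in> Hom C x (Ao \<beta> y)"
    and b: "b \<in> carrier G" and a: "a \<in> carrier G"
  shows "Cmp CG x (Ao \<beta> y) y (canP_phi C G Ao (inv\<^bsub>G\<^esub> \<beta>) (Ao \<beta> y)) (canP_mor C G Ao Am x (Ao \<beta> y) h) (b, a)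
       = Cmp C (Ao a x) (Ao a (Ao \<beta> y)) (Ao b y)
           (if \<beta> = inv\<^bsub>G\<^esub> a \<otimes>\<^bsub>G\<^esub> b then Idm C (Ao a (Ao \<beta> y)) else Zerom C (Ao a (Ao \<beta> y)) (Ao b y))
           (Am a x (Ao \<beta> y) h)"
proof -
  have "a = b \<otimes>\<^bsub>G\<^esub> inv\<^bsub>G\<^esub> \<beta> \<longleftrightarrow> \<beta> = inv\<^bsub>G\<^esub> a \<otimes>\<^bsub>G\<^esub> b"
    using be a b by (metis G.inv_closed G.inv_solve_left G.inv_solve_right G.m_closed)
  moreover have "Cmp CG x (Ao \<beta> y) y (canP_phi C G Ao (inv\<^bsub>G\<^esub> \<beta>) (Ao \<beta> y)) (canP_mor C G Ao Am x (Ao \<beta> y) h) (b, a)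
      = Cmp C (Ao a x) (Ao a (Ao \<beta> y)) (Ao b y)
          (canP_phi C G Ao (inv\<^bsub>G\<^esub> \<beta>) (Ao \<beta> y) (b, a)) (canP_mor C G Ao Am x (Ao \<beta> y) h (a, a))"
    using assms by (intro cmpCG_eval_single) (auto simp: canP_eval)
  ultimately show ?thesis using be a b y by (simp add: canP_eval canPphi_eval)
qed

lemma decomp_CG:
  assumes x: "x \<in> Ob C" and y: "y \<in> Ob C" and f: "f \<in> Hom CG x y"
  shows "f = hsum CG x y (col1_support f x y)
     (\<lambda>\<beta>. Cmp CG x (Ao \<beta> y) y (canP_phi C G Ao (inv\<^bsub>G\<^esub> \<beta>) (Ao \<beta> y))
                 (canP_mor C G Ao Am x (Ao \<beta> y) (f (\<beta>, \<one>\<^bsub>G\<^esub>))))"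
    (is "f = hsum CG x y ?S ?T")
proof -
  have fin: "finite ?S" using orbit_col1_finite[OF f x] .
  have T_hom: "?T \<beta> \<in> Hom CG x y" if "\<beta> \<in> carrier G" for \<beta>
    using that x y f by (intro cmp_CG_hom) auto
  show ?thesis
  proof (rule orbit_mor_eqI[OF orbit_hom_ext[OF f] orbit_hom_ext])
    show "hsum CG x y ?S ?T \<in> Hom CG x y" using fin T_hom x y by auto
  next
    fix b a assume b: "b \<in> carrier G" and a: "a \<in> carrier G"
    define \<beta>0 where "\<beta>0 = inv\<^bsub>G\<^esub> a \<otimes>\<^bsub>G\<^esub> b"
    have b0: "\<beta>0 \<in> carrier G" using a b by (simp add: \<beta>0_def)
    have T_eval: "?T \<beta> (b, a) = Cmp C (Ao a x) (Ao a (Ao \<beta> y)) (Ao b y)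
         (if \<beta> = \<beta>0 then Idm C (Ao a (Ao \<beta> y)) else Zerom C (Ao a (Ao \<beta> y)) (Ao b y))
         (Am a x (Ao \<beta> y) (f (\<beta>, \<one>\<^bsub>G\<^esub>)))" if be: "\<beta> \<in> carrier G" for \<beta>
      unfolding \<beta>0_def by (rule decomp_summand_eval[OF x y be orbit_entry_hom1[OF f x be] b a])
    have f_ba: "f (b, a) = Am a x (Ao \<beta>0 y) (f (\<beta>0, \<one>\<^bsub>G\<^esub>))"
      unfolding \<beta>0_def by (rule orbit_entry_from_col1[OF f x y b a])
    have Ao0: "Ao a (Ao \<beta>0 y) = Ao b y" using a b y by (simp add: \<beta>0_def)
    have "Am a x (Ao \<beta>0 y) (f (\<beta>0, \<one>\<^bsub>G\<^esub>)) \<in> Hom C (Ao a x) (Ao b y)"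
      using Am_hom[OF a x _ orbit_entry_hom1[OF f x b0]] b0 y Ao0 by simp
    then have T0: "?T \<beta>0 (b, a) = f (b, a)"
      unfolding T_eval[OF b0] f_ba Ao0 using a b x y by simp
    have "hsum CG x y ?S ?T (b, a) = hsum C (Ao a x) (Ao b y) ?S (\<lambda>\<beta>. ?T \<beta> (b, a))"
      by (rule hsum_CG_eval[OF b a])
    also have "\<dots> = hsum C (Ao a x) (Ao b y) {\<beta>0} (\<lambda>\<beta>. ?T \<beta> (b, a))"
    proof (rule hsum_neutral)
      show "?T \<beta> (b, a) = Zerom C (Ao a x) (Ao b y)" if "\<beta> \<in> {\<beta>0} - ?S" for \<beta>
      proof -
        have "f (\<beta>0, \<one>\<^bsub>G\<^esub>) = Zerom C x (Ao \<beta>0 y)" using that b0 by auto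
        then show ?thesis using that T0 f_ba a b0 x y Ao0 by simp
      qed
      show "?T \<beta> (b, a) = Zerom C (Ao a x) (Ao b y)" if "\<beta> \<in> ?S - {\<beta>0}" for \<beta>
        using that T_eval[of \<beta>] a b x y f by auto
    qed (use fin a b b0 x y T_hom in auto)
    also have "\<dots> = f (b, a)" using T0 a b x y f by (subst hsum_single) auto
    finally show "f (b, a) = hsum CG x y ?S ?T (b, a)" by simp
  qed
qed

end

section \<open>Extending a G-invariant functor along \<open>P\<close>\<close>

text \<open>For a \<open>G\<close>-invariant functor \<open>(F, \<phi>)\<close> the morphisms \<open>\<phi>\<^sub>\<beta>\<^sub>\<inverse>,\<^sub>\<beta>\<^sub>w : F(\<beta>w) \<rightarrow> F w\<close> play the role
  of \<open>F\<close> applied to \<open>\<phi>\<^sub>\<beta>\<^sub>\<inverse>,\<^sub>\<beta>\<^sub>w\<close> in \<open>C/G\<close>; guided by the decomposition of morphisms of \<open>C/G\<close>,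
  the extension of \<open>F\<close> sends \<open>f : x \<rightarrow> y\<close> to \<open>\<Sum>\<^sub>\<beta> \<phi>\<^sub>\<beta>\<^sub>\<inverse>,\<^sub>\<beta>\<^sub>y \<circ> F(f\<^sub>\<beta>\<^sub>,\<^sub>1)\<close>.\<close>

definition phi_back :: "'g monoid \<Rightarrow> ('g \<Rightarrow> 'o \<Rightarrow> 'o) \<Rightarrow> ('g \<Rightarrow> 'o \<Rightarrow> 'm2) \<Rightarrow> 'g \<Rightarrow> 'o \<Rightarrow> 'm2" where
  "phi_back G Ao \<phi> \<beta> w = \<phi> (inv\<^bsub>G\<^esub> \<beta>) (Ao \<beta> w)"

definition ext_term ::
  "('o, 'm, 'k) lcat \<Rightarrow> 'g monoid \<Rightarrow> ('g \<Rightarrow> 'o \<Rightarrow> 'o) \<Rightarrow> ('o2, 'm2, 'k) lcat \<Rightarrow>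
   ('o \<Rightarrow> 'o2) \<Rightarrow> ('o \<Rightarrow> 'o \<Rightarrow> 'm \<Rightarrow> 'm2) \<Rightarrow> ('g \<Rightarrow> 'o \<Rightarrow> 'm2) \<Rightarrow>
   ('g \<times> 'g \<Rightarrow> 'm) \<Rightarrow> 'o \<Rightarrow> 'o \<Rightarrow> 'g \<Rightarrow> 'm2" where
  "ext_term C G Ao D Fo Fm \<phi> f x y \<beta> =
     Cmp D (Fo x) (Fo (Ao \<beta> y)) (Fo y) (phi_back G Ao \<phi> \<beta> y) (Fm x (Ao \<beta> y) (f (\<beta>, \<one>\<^bsub>G\<^esub>)))"

definition ext_mor ::
  "('o, 'm, 'k) lcat \<Rightarrow> 'g monoid \<Rightarrow> ('g \<Rightarrow> 'o \<Rightarrow> 'o) \<Rightarrow> ('o2, 'm2, 'k) lcat \<Rightarrow>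
   ('o \<Rightarrow> 'o2) \<Rightarrow> ('o \<Rightarrow> 'o \<Rightarrow> 'm \<Rightarrow> 'm2) \<Rightarrow> ('g \<Rightarrow> 'o \<Rightarrow> 'm2) \<Rightarrow>
   'o \<Rightarrow> 'o \<Rightarrow> ('g \<times> 'g \<Rightarrow> 'm) \<Rightarrow> 'm2" where
  "ext_mor C G Ao D Fo Fm \<phi> x y f =
     hsum D (Fo x) (Fo y) {\<beta> \<in> carrier G. f (\<beta>, \<one>\<^bsub>G\<^esub>) \<noteq> Zerom C x (Ao \<beta> y)}
       (ext_term C G Ao D Fo Fm \<phi> f x y)"

locale inv_fun = gc C G Ao Am
  for C :: "('o, 'm, 'k::comm_ring_1) lcat" and G :: "'g monoid"
    and Ao :: "'g \<Rightarrow> 'o \<Rightarrow> 'o" and Am :: "'g \<Rightarrow> 'o \<Rightarrow> 'o \<Rightarrow> 'm \<Rightarrow> 'm" +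
  fixes D :: "('o2, 'm2, 'k) lcat" and Fo :: "'o \<Rightarrow> 'o2" and Fm :: "'o \<Rightarrow> 'o \<Rightarrow> 'm \<Rightarrow> 'm2"
    and \<phi> :: "'g \<Rightarrow> 'o \<Rightarrow> 'm2"
  assumes linD: "lin_cat D" and invF: "inv_functor C D G Ao Am Fo Fm \<phi>"
begin

sublocale D: lcat D by (rule lcat.intro) (rule linD)

lemma F_lin: "lin_functor C D Fo Fm"
  using invF unfolding inv_functor_def by simp

lemma F_ob[simp, intro]: "x \<in> Ob C \<Longrightarrow> Fo x \<in> Ob D"
  using lin_functor_ob[OF F_lin] .

lemma F_hom[simp, intro]: "x \<in> Ob C \<Longrightarrow> y \<in> Ob C \<Longrightarrow> f \<in> Hom C x y \<Longrightarrow> Fm x y f \<in> Hom D (Fo x) (Fo y)"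
  using lin_functor_hom[OF F_lin] .

lemma F_idm[simp]: "x \<in> Ob C \<Longrightarrow> Fm x x (Idm C x) = Idm D (Fo x)"
  using lin_functor_idm[OF F_lin] .

lemma F_cmp:
  "x \<in> Ob C \<Longrightarrow> y \<in> Ob C \<Longrightarrow> z \<in> Ob C \<Longrightarrow> f \<in> Hom C x y \<Longrightarrow> g \<in> Hom C y z \<Longrightarrow>
   Fm x z (Cmp C x y z g f) = Cmp D (Fo x) (Fo y) (Fo z) (Fm y z g) (Fm x y f)"
  using lin_functor_cmp[OF F_lin] .

lemma F_add:
  "x \<in> Ob C \<Longrightarrow> y \<in> Ob C \<Longrightarrow> f \<in> Hom C x y \<Longrightarrow> g \<in> Hom C x y \<Longrightarrow>
   Fm x y (Addm C x y f g) = Addm D (Fo x) (Fo y) (Fm x y f) (Fm x y g)"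
  using lin_functor_add[OF F_lin] .

lemma F_smul:
  "x \<in> Ob C \<Longrightarrow> y \<in> Ob C \<Longrightarrow> f \<in> Hom C x y \<Longrightarrow>
   Fm x y (Smul C x y a f) = Smul D (Fo x) (Fo y) a (Fm x y f)"
  using lin_functor_smul[OF F_lin] .

lemma F_zero[simp]: "x \<in> Ob C \<Longrightarrow> y \<in> Ob C \<Longrightarrow> Fm x y (Zerom C x y) = Zerom D (Fo x) (Fo y)"
  by (rule additive_map_zero[where C=C]) (auto simp: linD F_add)

lemma F_hsum:
  "x \<in> Ob C \<Longrightarrow> y \<in> Ob C \<Longrightarrow> finite S \<Longrightarrow> (\<And>i. i \<in> S \<Longrightarrow> g i \<in> Hom C x y) \<Longrightarrow>
   Fm x y (hsum C x y S g) = hsum D (Fo x) (Fo y) S (\<lambda>i. Fm x y (g i))"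
  by (rule additive_map_hsum[where C=C]) (auto simp: linD F_add)

lemma phi_hom[simp, intro]: "a \<in> carrier G \<Longrightarrow> x \<in> Ob C \<Longrightarrow> \<phi> a x \<in> Hom D (Fo x) (Fo (Ao a x))"
  using invF unfolding inv_functor_def by simp

lemma phi_nat:
  "a \<in> carrier G \<Longrightarrow> x \<in> Ob C \<Longrightarrow> y \<in> Ob C \<Longrightarrow> f \<in> Hom C x y \<Longrightarrow>
   Cmp D (Fo x) (Fo y) (Fo (Ao a y)) (\<phi> a y) (Fm x y f) =
   Cmp D (Fo x) (Fo (Ao a x)) (Fo (Ao a y)) (Fm (Ao a x) (Ao a y) (Am a x y f)) (\<phi> a x)"
  using invF unfolding inv_functor_def by simp

lemma phi_one[simp]: "x \<in> Ob C \<Longrightarrow> \<phi> \<one>\<^bsub>G\<^esub> x = Idm D (Fo x)"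
  using invF unfolding inv_functor_def by simp

lemma phi_comp:
  "a \<in> carrier G \<Longrightarrow> b \<in> carrier G \<Longrightarrow> x \<in> Ob C \<Longrightarrow>
   Cmp D (Fo x) (Fo (Ao a x)) (Fo (Ao b (Ao a x))) (\<phi> b (Ao a x)) (\<phi> a x) = \<phi> (b \<otimes>\<^bsub>G\<^esub> a) x"
  using invF unfolding inv_functor_def by simp

abbreviation \<psi> :: "'g \<Rightarrow> 'o \<Rightarrow> 'm2" where "\<psi> \<equiv> phi_back G Ao \<phi>"
abbreviation eterm :: "('g \<times> 'g \<Rightarrow> 'm) \<Rightarrow> 'o \<Rightarrow> 'o \<Rightarrow> 'g \<Rightarrow> 'm2" where
  "eterm \<equiv> ext_term C G Ao D Fo Fm \<phi>"
abbreviation Fext :: "'o \<Rightarrow> 'o \<Rightarrow> ('g \<times> 'g \<Rightarrow> 'm) \<Rightarrow> 'm2" where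
  "Fext \<equiv> ext_mor C G Ao D Fo Fm \<phi>"

lemma psi_hom[simp, intro]: "\<beta> \<in> carrier G \<Longrightarrow> w \<in> Ob C \<Longrightarrow> \<psi> \<beta> w \<in> Hom D (Fo (Ao \<beta> w)) (Fo w)"
  using phi_hom[of "inv\<^bsub>G\<^esub> \<beta>" "Ao \<beta> w"] by (simp add: phi_back_def)

lemma psi_one[simp]: "w \<in> Ob C \<Longrightarrow> \<psi> \<one>\<^bsub>G\<^esub> w = Idm D (Fo w)"
  by (simp add: phi_back_def)

lemma psi_mult:
  assumes c: "c \<in> carrier G" and ga: "\<gamma> \<in> carrier G" and z: "z \<in> Ob C"
  shows "\<psi> (c \<otimes>\<^bsub>G\<^esub> \<gamma>) z
       = Cmp D (Fo (Ao c (Ao \<gamma> z))) (Fo (Ao \<gamma> z)) (Fo z) (\<psi> \<gamma> z) (\<phi> (inv\<^bsub>G\<^esub> c) (Ao c (Ao \<gamma> z)))"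
proof -
  let ?w = "Ao c (Ao \<gamma> z)"
  have "Cmp D (Fo ?w) (Fo (Ao (inv\<^bsub>G\<^esub> c) ?w)) (Fo (Ao (inv\<^bsub>G\<^esub> \<gamma>) (Ao (inv\<^bsub>G\<^esub> c) ?w)))
          (\<phi> (inv\<^bsub>G\<^esub> \<gamma>) (Ao (inv\<^bsub>G\<^esub> c) ?w)) (\<phi> (inv\<^bsub>G\<^esub> c) ?w)
      = \<phi> (inv\<^bsub>G\<^esub> \<gamma> \<otimes>\<^bsub>G\<^esub> inv\<^bsub>G\<^esub> c) ?w"
    by (rule phi_comp) (use c ga z in auto)
  then show ?thesis using c ga z by (simp add: phi_back_def G.inv_mult_group)
qed

lemma eterm_hom[simp, intro]:
  "f \<in> Hom CG x y \<Longrightarrow> x \<in> Ob C \<Longrightarrow> y \<in> Ob C \<Longrightarrow> \<beta> \<in> carrier G \<Longrightarrow> eterm f x y \<beta> \<in> Hom D (Fo x) (Fo y)"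
  unfolding ext_term_def by (intro D.cmp_hom) auto

lemma eterm_zero:
  "x \<in> Ob C \<Longrightarrow> y \<in> Ob C \<Longrightarrow> \<beta> \<in> carrier G \<Longrightarrow> f (\<beta>, \<one>\<^bsub>G\<^esub>) = Zerom C x (Ao \<beta> y) \<Longrightarrow>
   eterm f x y \<beta> = Zerom D (Fo x) (Fo y)"
  unfolding ext_term_def by simp

lemma Fext_over:
  assumes "f \<in> Hom CG x y" "x \<in> Ob C" "y \<in> Ob C" "finite T" "T \<subseteq> carrier G"
    "\<And>\<beta>. \<beta> \<in> carrier G \<Longrightarrow> \<beta> \<notin> T \<Longrightarrow> f (\<beta>, \<one>\<^bsub>G\<^esub>) = Zerom C x (Ao \<beta> y)"
  shows "Fext x y f = hsum D (Fo x) (Fo y) T (eterm f x y)"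
  unfolding ext_mor_def
  by (rule D.hsum_neutral) (use assms orbit_col1_finite[OF assms(1,2)] eterm_zero in auto)

lemma Fext_hom[simp, intro]: "f \<in> Hom CG x y \<Longrightarrow> x \<in> Ob C \<Longrightarrow> y \<in> Ob C \<Longrightarrow> Fext x y f \<in> Hom D (Fo x) (Fo y)"
  unfolding ext_mor_def by (intro D.hsum_hom) (auto intro: orbit_col1_finite)

lemma Fext_canP:
  assumes x: "x \<in> Ob C" and y: "y \<in> Ob C" and f: "f \<in> Hom C x y"
  shows "Fext x y (canP_mor C G Ao Am x y f) = Fm x y f"
proof -
  have "Fext x y (canP_mor C G Ao Am x y f) = hsum D (Fo x) (Fo y) {\<one>\<^bsub>G\<^esub>} (eterm (canP_mor C G Ao Am x y f) x y)"
    by (rule Fext_over) (use x y f in \<open>auto simp: canP_eval\<close>)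
  also have "\<dots> = eterm (canP_mor C G Ao Am x y f) x y \<one>\<^bsub>G\<^esub>" using x y f by (intro D.hsum_single) auto
  also have "\<dots> = Fm x y f" using x y f by (simp add: ext_term_def canP_eval)
  finally show ?thesis .
qed

lemma Fext_canPphi:
  assumes x: "x \<in> Ob C" and a: "a \<in> carrier G"
  shows "Fext x (Ao a x) (canP_phi C G Ao a x) = \<phi> a x"
proof -
  have off: "canP_phi C G Ao a x (\<beta>, \<one>\<^bsub>G\<^esub>) = Zerom C x (Ao \<beta> (Ao a x))"
    if "\<beta> \<in> carrier G" "\<beta> \<noteq> inv\<^bsub>G\<^esub> a" for \<beta>
  proof -
    have "\<one>\<^bsub>G\<^esub> \<noteq> \<beta> \<otimes>\<^bsub>G\<^esub> a" using that a G.inv_equality by fastforce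
    then show ?thesis using that a x by (simp add: canPphi_eval)
  qed
  have "Fext x (Ao a x) (canP_phi C G Ao a x)
      = hsum D (Fo x) (Fo (Ao a x)) {inv\<^bsub>G\<^esub> a} (eterm (canP_phi C G Ao a x) x (Ao a x))"
    by (rule Fext_over) (use x a off in auto)
  also have "\<dots> = eterm (canP_phi C G Ao a x) x (Ao a x) (inv\<^bsub>G\<^esub> a)" using x a by (intro D.hsum_single) auto
  also have "\<dots> = \<phi> a x" using x a by (simp add: ext_term_def canPphi_eval phi_back_def)
  finally show ?thesis .
qed

lemma Fext_idm:
  assumes x: "x \<in> Ob C"
  shows "Fext x x (Idm CG x) = Idm D (Fo x)"
proof -
  have "Fext x x (Idm CG x) = hsum D (Fo x) (Fo x) {\<one>\<^bsub>G\<^esub>} (eterm (Idm CG x) x x)"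
    by (rule Fext_over[OF idm_CG_hom[OF x]]) (use x in \<open>auto simp: CG_simps\<close>)
  also have "\<dots> = eterm (Idm CG x) x x \<one>\<^bsub>G\<^esub>" using x by (intro D.hsum_single) auto
  also have "\<dots> = Idm D (Fo x)" using x by (simp add: ext_term_def CG_simps)
  finally show ?thesis .
qed

lemma Fext_add:
  assumes x: "x \<in> Ob C" and y: "y \<in> Ob C" and f: "f \<in> Hom CG x y" and g: "g \<in> Hom CG x y"
  shows "Fext x y (Addm CG x y f g) = Addm D (Fo x) (Fo y) (Fext x y f) (Fext x y g)"
proof -
  let ?T = "col1_support f x y \<union> col1_support g x y"
  have fin: "finite ?T" using orbit_col1_finite[OF f x] orbit_col1_finite[OF g x] by simp
  have "Fext x y (Addm CG x y f g) = hsum D (Fo x) (Fo y) ?T (eterm (Addm CG x y f g) x y)"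
    by (rule Fext_over[OF add_CG_hom[OF x y f g]]) (use x y f g fin in \<open>auto simp: CG_simps\<close>)
  also have "\<dots> = hsum D (Fo x) (Fo y) ?T (\<lambda>\<beta>. Addm D (Fo x) (Fo y) (eterm f x y \<beta>) (eterm g x y \<beta>))"
    using fin x y f g by (intro hsum_cong) (auto simp: ext_term_def CG_simps F_add D.cmp_add_r)
  also have "\<dots> = Addm D (Fo x) (Fo y) (hsum D (Fo x) (Fo y) ?T (eterm f x y)) (hsum D (Fo x) (Fo y) ?T (eterm g x y))"
    using fin x y f g by (intro D.hsum_add) auto
  also have "\<dots> = Addm D (Fo x) (Fo y) (Fext x y f) (Fext x y g)"
    using Fext_over[OF f x y fin] Fext_over[OF g x y fin] by simp
  finally show ?thesis .
qed

lemma Fext_smul: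
  assumes x: "x \<in> Ob C" and y: "y \<in> Ob C" and f: "f \<in> Hom CG x y"
  shows "Fext x y (Smul CG x y k f) = Smul D (Fo x) (Fo y) k (Fext x y f)"
proof -
  let ?T = "col1_support f x y"
  have fin: "finite ?T" using orbit_col1_finite[OF f x] by simp
  have "Fext x y (Smul CG x y k f) = hsum D (Fo x) (Fo y) ?T (eterm (Smul CG x y k f) x y)"
    by (rule Fext_over[OF smul_CG_hom[OF x y f]]) (use x y f fin in \<open>auto simp: CG_simps\<close>)
  also have "\<dots> = hsum D (Fo x) (Fo y) ?T (\<lambda>\<beta>. Smul D (Fo x) (Fo y) k (eterm f x y \<beta>))"
    using fin x y f by (intro hsum_cong) (auto simp: ext_term_def CG_simps F_smul D.cmp_smul_r)
  also have "\<dots> = Smul D (Fo x) (Fo y) k (Fext x y f)"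
    unfolding ext_mor_def using fin x y f by (intro D.hsum_smul[symmetric]) auto
  finally show ?thesis .
qed

text \<open>Writing
  \<open>(g f)\<^sub>\<beta>\<^sub>,\<^sub>1 = \<Sum>\<^sub>c g\<^sub>\<beta>\<^sub>,\<^sub>c f\<^sub>c\<^sub>,\<^sub>1\<close>, the extension of \<open>g f\<close> becomes a double sum of the terms
  \<open>cterm \<beta> c\<close> below; substituting \<open>\<beta> = c \<gamma>\<close>, naturality of \<open>\<phi>\<close> and the cocycle identity
  turn \<open>cterm (c \<gamma>) c\<close> into the product of the \<open>\<gamma>\<close>-term of \<open>g\<close> and the \<open>c\<close>-term of \<open>f\<close>.\<close>

definition cterm :: "'o \<Rightarrow> 'o \<Rightarrow> 'o \<Rightarrow> ('g \<times> 'g \<Rightarrow> 'm) \<Rightarrow> ('g \<times> 'g \<Rightarrow> 'm) \<Rightarrow> 'g \<Rightarrow> 'g \<Rightarrow> 'm2" where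
  "cterm x y z g f \<beta> c = Cmp D (Fo x) (Fo (Ao \<beta> z)) (Fo z) (\<psi> \<beta> z)
      (Cmp D (Fo x) (Fo (Ao c y)) (Fo (Ao \<beta> z)) (Fm (Ao c y) (Ao \<beta> z) (g (\<beta>, c))) (Fm x (Ao c y) (f (c, \<one>\<^bsub>G\<^esub>))))"

lemma cterm_hom:
  assumes "x \<in> Ob C" "y \<in> Ob C" "z \<in> Ob C" "f \<in> Hom CG x y" "g \<in> Hom CG y z" "\<beta> \<in> carrier G" "c \<in> carrier G"
  shows "cterm x y z g f \<beta> c \<in> Hom D (Fo x) (Fo z)"
  unfolding cterm_def using assms by (intro D.cmp_hom) auto

lemma cterm_zero:
  assumes "x \<in> Ob C" "y \<in> Ob C" "z \<in> Ob C" "f \<in> Hom CG x y" "g \<in> Hom CG y z" "\<beta> \<in> carrier G" "c \<in> carrier G"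
    "g (\<beta>, c) = Zerom C (Ao c y) (Ao \<beta> z)"
  shows "cterm x y z g f \<beta> c = Zerom D (Fo x) (Fo z)"
  unfolding cterm_def using assms by simp

lemma psi_transport:
  assumes y: "y \<in> Ob C" and z: "z \<in> Ob C" and c: "c \<in> carrier G" and ga: "\<gamma> \<in> carrier G"
    and g: "g \<in> Hom CG y z"
  shows "Cmp D (Fo (Ao c y)) (Fo (Ao c (Ao \<gamma> z))) (Fo z) (\<psi> (c \<otimes>\<^bsub>G\<^esub> \<gamma>) z)
            (Fm (Ao c y) (Ao c (Ao \<gamma> z)) (g (c \<otimes>\<^bsub>G\<^esub> \<gamma>, c)))
       = Cmp D (Fo (Ao c y)) (Fo y) (Fo z)
            (Cmp D (Fo y) (Fo (Ao \<gamma> z)) (Fo z) (\<psi> \<gamma> z) (Fm y (Ao \<gamma> z) (g (\<gamma>, \<one>\<^bsub>G\<^esub>)))) (\<psi> c y)"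
proof -
  let ?h = "g (c \<otimes>\<^bsub>G\<^esub> \<gamma>, c)"
  let ?w = "Ao c (Ao \<gamma> z)"
  have ic: "inv\<^bsub>G\<^esub> c \<in> carrier G" using c by simp
  have h: "?h \<in> Hom C (Ao c y) ?w" using orbit_entry_hom[OF g, of "c \<otimes>\<^bsub>G\<^esub> \<gamma>" c] c ga z by simp
  have g1: "g (\<gamma>, \<one>\<^bsub>G\<^esub>) = Am (inv\<^bsub>G\<^esub> c) (Ao c y) ?w ?h"
  proof -
    have "g (inv\<^bsub>G\<^esub> c \<otimes>\<^bsub>G\<^esub> (c \<otimes>\<^bsub>G\<^esub> \<gamma>), inv\<^bsub>G\<^esub> c \<otimes>\<^bsub>G\<^esub> c) = Am (inv\<^bsub>G\<^esub> c) (Ao c y) (Ao (c \<otimes>\<^bsub>G\<^esub> \<gamma>) z) ?h"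
      using orbit_entry_shift[OF g ic _ c] c ga by simp
    moreover have "inv\<^bsub>G\<^esub> c \<otimes>\<^bsub>G\<^esub> (c \<otimes>\<^bsub>G\<^esub> \<gamma>) = \<gamma>" using c ga by (simp add: G.m_assoc[symmetric])
    ultimately show ?thesis using c ga z by simp
  qed
  have nat: "Cmp D (Fo (Ao c y)) (Fo ?w) (Fo (Ao \<gamma> z)) (\<phi> (inv\<^bsub>G\<^esub> c) ?w) (Fm (Ao c y) ?w ?h)
      = Cmp D (Fo (Ao c y)) (Fo y) (Fo (Ao \<gamma> z)) (Fm y (Ao \<gamma> z) (g (\<gamma>, \<one>\<^bsub>G\<^esub>))) (\<psi> c y)"
  proof -
    have "Cmp D (Fo (Ao c y)) (Fo ?w) (Fo (Ao (inv\<^bsub>G\<^esub> c) ?w)) (\<phi> (inv\<^bsub>G\<^esub> c) ?w) (Fm (Ao c y) ?w ?h) =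
        Cmp D (Fo (Ao c y)) (Fo (Ao (inv\<^bsub>G\<^esub> c) (Ao c y))) (Fo (Ao (inv\<^bsub>G\<^esub> c) ?w))
          (Fm (Ao (inv\<^bsub>G\<^esub> c) (Ao c y)) (Ao (inv\<^bsub>G\<^esub> c) ?w) (Am (inv\<^bsub>G\<^esub> c) (Ao c y) ?w ?h)) (\<phi> (inv\<^bsub>G\<^esub> c) (Ao c y))"
      by (rule phi_nat) (use ic c ga y z h in auto)
    then show ?thesis using c ga y z by (simp add: g1[symmetric] phi_back_def)
  qed
  have hF: "Fm (Ao c y) ?w ?h \<in> Hom D (Fo (Ao c y)) (Fo ?w)" using h c ga y z by auto
  have p1: "\<phi> (inv\<^bsub>G\<^esub> c) ?w \<in> Hom D (Fo ?w) (Fo (Ao \<gamma> z))"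
    using phi_hom[OF ic, of ?w] c ga z by simp
  have "Cmp D (Fo (Ao c y)) (Fo ?w) (Fo z) (\<psi> (c \<otimes>\<^bsub>G\<^esub> \<gamma>) z) (Fm (Ao c y) ?w ?h)
     = Cmp D (Fo (Ao c y)) (Fo ?w) (Fo z) (Cmp D (Fo ?w) (Fo (Ao \<gamma> z)) (Fo z) (\<psi> \<gamma> z) (\<phi> (inv\<^bsub>G\<^esub> c) ?w))
         (Fm (Ao c y) ?w ?h)"
    by (simp only: psi_mult[OF c ga z])
  also have "\<dots> = Cmp D (Fo (Ao c y)) (Fo (Ao \<gamma> z)) (Fo z) (\<psi> \<gamma> z)
        (Cmp D (Fo (Ao c y)) (Fo ?w) (Fo (Ao \<gamma> z)) (\<phi> (inv\<^bsub>G\<^esub> c) ?w) (Fm (Ao c y) ?w ?h))"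
    by (rule D.cmp_assoc[symmetric]) (use hF p1 c ga y z in auto)
  also have "\<dots> = Cmp D (Fo (Ao c y)) (Fo (Ao \<gamma> z)) (Fo z) (\<psi> \<gamma> z)
        (Cmp D (Fo (Ao c y)) (Fo y) (Fo (Ao \<gamma> z)) (Fm y (Ao \<gamma> z) (g (\<gamma>, \<one>\<^bsub>G\<^esub>))) (\<psi> c y))"
    by (simp only: nat)
  also have "\<dots> = Cmp D (Fo (Ao c y)) (Fo y) (Fo z)
            (Cmp D (Fo y) (Fo (Ao \<gamma> z)) (Fo z) (\<psi> \<gamma> z) (Fm y (Ao \<gamma> z) (g (\<gamma>, \<one>\<^bsub>G\<^esub>)))) (\<psi> c y)"
    by (rule D.cmp_assoc) (use g c ga y z in auto)
  finally show ?thesis .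
qed

lemma cterm_factor:
  assumes x: "x \<in> Ob C" and y: "y \<in> Ob C" and z: "z \<in> Ob C" and f: "f \<in> Hom CG x y" and g: "g \<in> Hom CG y z"
    and c: "c \<in> carrier G" and ga: "\<gamma> \<in> carrier G"
  shows "cterm x y z g f (c \<otimes>\<^bsub>G\<^esub> \<gamma>) c = Cmp D (Fo x) (Fo y) (Fo z) (eterm g y z \<gamma>) (eterm f x y c)"
proof -
  let ?w = "Ao c (Ao \<gamma> z)"
  let ?h = "g (c \<otimes>\<^bsub>G\<^esub> \<gamma>, c)"
  have hF: "Fm (Ao c y) ?w ?h \<in> Hom D (Fo (Ao c y)) (Fo ?w)"
    using orbit_entry_hom[OF g, of "c \<otimes>\<^bsub>G\<^esub> \<gamma>" c] c ga y z by simp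
  have fF: "Fm x (Ao c y) (f (c, \<one>\<^bsub>G\<^esub>)) \<in> Hom D (Fo x) (Fo (Ao c y))" using f c x y by auto
  have p0: "\<psi> (c \<otimes>\<^bsub>G\<^esub> \<gamma>) z \<in> Hom D (Fo ?w) (Fo z)" using psi_hom[of "c \<otimes>\<^bsub>G\<^esub> \<gamma>" z] c ga z by simp
  have "cterm x y z g f (c \<otimes>\<^bsub>G\<^esub> \<gamma>) c = Cmp D (Fo x) (Fo ?w) (Fo z) (\<psi> (c \<otimes>\<^bsub>G\<^esub> \<gamma>) z)
      (Cmp D (Fo x) (Fo (Ao c y)) (Fo ?w) (Fm (Ao c y) ?w ?h) (Fm x (Ao c y) (f (c, \<one>\<^bsub>G\<^esub>))))"
    unfolding cterm_def using c ga z by simp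
  also have "\<dots> = Cmp D (Fo x) (Fo (Ao c y)) (Fo z)
      (Cmp D (Fo (Ao c y)) (Fo ?w) (Fo z) (\<psi> (c \<otimes>\<^bsub>G\<^esub> \<gamma>) z) (Fm (Ao c y) ?w ?h))
      (Fm x (Ao c y) (f (c, \<one>\<^bsub>G\<^esub>)))"
    by (rule D.cmp_assoc) (use hF fF p0 c ga x y z in auto)
  also have "\<dots> = Cmp D (Fo x) (Fo (Ao c y)) (Fo z)
      (Cmp D (Fo (Ao c y)) (Fo y) (Fo z)
            (Cmp D (Fo y) (Fo (Ao \<gamma> z)) (Fo z) (\<psi> \<gamma> z) (Fm y (Ao \<gamma> z) (g (\<gamma>, \<one>\<^bsub>G\<^esub>)))) (\<psi> c y))
      (Fm x (Ao c y) (f (c, \<one>\<^bsub>G\<^esub>)))"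
    by (simp only: psi_transport[OF y z c ga g])
  also have "\<dots> = Cmp D (Fo x) (Fo y) (Fo z)
            (Cmp D (Fo y) (Fo (Ao \<gamma> z)) (Fo z) (\<psi> \<gamma> z) (Fm y (Ao \<gamma> z) (g (\<gamma>, \<one>\<^bsub>G\<^esub>))))
            (Cmp D (Fo x) (Fo (Ao c y)) (Fo y) (\<psi> c y) (Fm x (Ao c y) (f (c, \<one>\<^bsub>G\<^esub>))))"
    by (rule D.cmp_assoc[symmetric]) (use fF g c ga x y z in auto)
  also have "\<dots> = Cmp D (Fo x) (Fo y) (Fo z) (eterm g y z \<gamma>) (eterm f x y c)"
    by (simp add: ext_term_def)
  finally show ?thesis .
qed

lemma eterm_cmp:
  assumes x: "x \<in> Ob C" and y: "y \<in> Ob C" and z: "z \<in> Ob C" and f: "f \<in> Hom CG x y" and g: "g \<in> Hom CG y z"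
    and b: "\<beta> \<in> carrier G"
  shows "eterm (Cmp CG x y z g f) x z \<beta> = hsum D (Fo x) (Fo z) (col1_support f x y) (cterm x y z g f \<beta>)"
proof -
  let ?Sf = "col1_support f x y"
  let ?h = "Cmp CG x y z g f"
  have finSf: "finite ?Sf" using orbit_col1_finite[OF f x] .
  have hb: "?h (\<beta>, \<one>\<^bsub>G\<^esub>) = hsum C x (Ao \<beta> z) ?Sf (\<lambda>c. Cmp C x (Ao c y) (Ao \<beta> z) (g (\<beta>, c)) (f (c, \<one>\<^bsub>G\<^esub>)))"
    using cmpCG_eval[OF b G.one_closed, of x y z g f] x by simp
  have Fh: "Fm x (Ao \<beta> z) (?h (\<beta>, \<one>\<^bsub>G\<^esub>)) = hsum D (Fo x) (Fo (Ao \<beta> z)) ?Sf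
       (\<lambda>c. Cmp D (Fo x) (Fo (Ao c y)) (Fo (Ao \<beta> z)) (Fm (Ao c y) (Ao \<beta> z) (g (\<beta>, c))) (Fm x (Ao c y) (f (c, \<one>\<^bsub>G\<^esub>))))"
  proof -
    have "Fm x (Ao \<beta> z) (?h (\<beta>, \<one>\<^bsub>G\<^esub>)) = hsum D (Fo x) (Fo (Ao \<beta> z)) ?Sf
        (\<lambda>c. Fm x (Ao \<beta> z) (Cmp C x (Ao c y) (Ao \<beta> z) (g (\<beta>, c)) (f (c, \<one>\<^bsub>G\<^esub>))))"
      unfolding hb using b x y z f g finSf by (intro F_hsum) auto
    also have "\<dots> = hsum D (Fo x) (Fo (Ao \<beta> z)) ?Sf
        (\<lambda>c. Cmp D (Fo x) (Fo (Ao c y)) (Fo (Ao \<beta> z)) (Fm (Ao c y) (Ao \<beta> z) (g (\<beta>, c))) (Fm x (Ao c y) (f (c, \<one>\<^bsub>G\<^esub>))))"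
      using b x y z f g finSf by (intro hsum_cong) (auto simp: F_cmp)
    finally show ?thesis .
  qed
  show ?thesis unfolding ext_term_def Fh cterm_def
    using b x y z f g finSf by (intro D.hsum_cmp_r) auto
qed

text \<open>Summing \<open>cterm\<close> over \<open>\<beta>\<close> for a fixed \<open>c\<close>: after the substitution \<open>\<beta> = c \<gamma>\<close> only the
  support of the first column of \<open>g\<close> contributes.\<close>
lemma cterm_sum:
  assumes x: "x \<in> Ob C" and y: "y \<in> Ob C" and z: "z \<in> Ob C" and f: "f \<in> Hom CG x y" and g: "g \<in> Hom CG y z"
    and c: "c \<in> carrier G" and T: "finite T" "T \<subseteq> carrier G"
    and T_supp: "\<And>\<beta>. \<beta> \<in> carrier G \<Longrightarrow> \<beta> \<notin> T \<Longrightarrow> g (\<beta>, c) = Zerom C (Ao c y) (Ao \<beta> z)"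
  shows "hsum D (Fo x) (Fo z) T (\<lambda>\<beta>. cterm x y z g f \<beta> c)
       = hsum D (Fo x) (Fo z) (col1_support g y z) (\<lambda>\<gamma>. Cmp D (Fo x) (Fo y) (Fo z) (eterm g y z \<gamma>) (eterm f x y c))"
proof -
  let ?Sg = "col1_support g y z"
  let ?B = "(\<lambda>\<gamma>. c \<otimes>\<^bsub>G\<^esub> \<gamma>) ` ?Sg"
  have finSg: "finite ?Sg" using orbit_col1_finite[OF g y] .
  have BG: "?B \<subseteq> carrier G" using c by auto
  have "hsum D (Fo x) (Fo z) T (\<lambda>\<beta>. cterm x y z g f \<beta> c) = hsum D (Fo x) (Fo z) ?B (\<lambda>\<beta>. cterm x y z g f \<beta> c)"
  proof (rule D.hsum_neutral)
    show "cterm x y z g f \<beta> c = Zerom D (Fo x) (Fo z)" if "\<beta> \<in> ?B - T" for \<beta>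
      using that BG T_supp cterm_zero[OF x y z f g _ c] by blast
    show "cterm x y z g f \<beta> c = Zerom D (Fo x) (Fo z)" if "\<beta> \<in> T - ?B" for \<beta>
    proof -
      have bG: "\<beta> \<in> carrier G" using that T by blast
      define \<gamma> where "\<gamma> = inv\<^bsub>G\<^esub> c \<otimes>\<^bsub>G\<^esub> \<beta>"
      have ga: "\<gamma> \<in> carrier G" "\<beta> = c \<otimes>\<^bsub>G\<^esub> \<gamma>" using c bG by (auto simp: \<gamma>_def G.m_assoc[symmetric])
      then have "g (\<gamma>, \<one>\<^bsub>G\<^esub>) = Zerom C y (Ao \<gamma> z)" using that by blast
      moreover have "g (\<beta>, c) = Am c y (Ao \<gamma> z) (g (\<gamma>, \<one>\<^bsub>G\<^esub>))"
        using orbit_entry_shift[OF g c ga(1) G.one_closed] ga c y z by simp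
      ultimately have "g (\<beta>, c) = Zerom C (Ao c y) (Ao \<beta> z)" using ga c y z by simp
      then show ?thesis by (rule cterm_zero[OF x y z f g bG c])
    qed
  qed (use T finSg BG x z cterm_hom[OF x y z f g _ c] in auto)
  also have "\<dots> = hsum D (Fo x) (Fo z) ?Sg (\<lambda>\<gamma>. cterm x y z g f (c \<otimes>\<^bsub>G\<^esub> \<gamma>) c)"
    by (rule D.hsum_reindex) (use finSg c x z cterm_hom[OF x y z f g _ c] in \<open>auto simp: inj_on_def\<close>)
  also have "\<dots> = hsum D (Fo x) (Fo z) ?Sg (\<lambda>\<gamma>. Cmp D (Fo x) (Fo y) (Fo z) (eterm g y z \<gamma>) (eterm f x y c))"
    using finSg c by (intro hsum_cong) (auto intro!: cterm_factor[OF x y z f g])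
  finally show ?thesis .
qed

lemma Fext_cmp:
  assumes x: "x \<in> Ob C" and y: "y \<in> Ob C" and z: "z \<in> Ob C" and f: "f \<in> Hom CG x y" and g: "g \<in> Hom CG y z"
  shows "Fext x z (Cmp CG x y z g f) = Cmp D (Fo x) (Fo y) (Fo z) (Fext y z g) (Fext x y f)"
proof -
  let ?Sf = "col1_support f x y"
  let ?Sg = "col1_support g y z"
  let ?T = "\<Union>c\<in>?Sf. {\<beta>\<in>carrier G. g (\<beta>, c) \<noteq> Zerom C (Ao c y) (Ao \<beta> z)}"
  let ?h = "Cmp CG x y z g f"
  have finSf: "finite ?Sf" using orbit_col1_finite[OF f x] .
  have finSg: "finite ?Sg" using orbit_col1_finite[OF g y] .
  have finT: "finite ?T" using finSf orbit_col_finite[OF g] by blast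
  have TG: "?T \<subseteq> carrier G" by blast
  have over_T: "Fext x z ?h = hsum D (Fo x) (Fo z) ?T (eterm ?h x z)"
  proof (rule Fext_over[OF cmp_CG_hom[OF x y z f g] x z finT TG])
    fix \<beta> assume b: "\<beta> \<in> carrier G" "\<beta> \<notin> ?T"
    show "?h (\<beta>, \<one>\<^bsub>G\<^esub>) = Zerom C x (Ao \<beta> z)"
    proof (rule ccontr)
      assume "?h (\<beta>, \<one>\<^bsub>G\<^esub>) \<noteq> Zerom C x (Ao \<beta> z)"
      then have "?h (\<beta>, \<one>\<^bsub>G\<^esub>) \<noteq> Zerom C (Ao \<one>\<^bsub>G\<^esub> x) (Ao \<beta> z)" using x by simp
      from cmpCG_nonzero[OF x y z f g b(1) G.one_closed this] b x show False by auto
    qed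
  qed
  have "Fext x z ?h = hsum D (Fo x) (Fo z) ?T (\<lambda>\<beta>. hsum D (Fo x) (Fo z) ?Sf (cterm x y z g f \<beta>))"
    unfolding over_T using finT TG eterm_cmp[OF x y z f g] by (intro hsum_cong) auto
  also have "\<dots> = hsum D (Fo x) (Fo z) ?Sf (\<lambda>c. hsum D (Fo x) (Fo z) ?T (\<lambda>\<beta>. cterm x y z g f \<beta> c))"
    by (rule D.hsum_swap) (use finT finSf TG x z cterm_hom[OF x y z f g] in auto)
  also have "\<dots> = hsum D (Fo x) (Fo z) ?Sf
      (\<lambda>c. hsum D (Fo x) (Fo z) ?Sg (\<lambda>\<gamma>. Cmp D (Fo x) (Fo y) (Fo z) (eterm g y z \<gamma>) (eterm f x y c)))"
    using finSf finT TG by (intro hsum_cong cterm_sum[OF x y z f g]) auto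
  also have "\<dots> = hsum D (Fo x) (Fo z) ?Sf (\<lambda>c. Cmp D (Fo x) (Fo y) (Fo z) (Fext y z g) (eterm f x y c))"
    unfolding ext_mor_def using finSf finSg x y z f g by (intro hsum_cong D.hsum_cmp_l[symmetric]) auto
  also have "\<dots> = Cmp D (Fo x) (Fo y) (Fo z) (Fext y z g) (Fext x y f)"
    unfolding ext_mor_def[of _ _ _ _ _ _ _ x y f] using finSf x y z f g by (intro D.hsum_cmp_r[symmetric]) auto
  finally show ?thesis .
qed

text \<open>The extension, made extensional so that it is an object of \<open>Fun(C/G, D)\<close>.\<close>
definition Hm :: "'o \<Rightarrow> 'o \<Rightarrow> ('g \<times> 'g \<Rightarrow> 'm) \<Rightarrow> 'm2" where
  "Hm = (\<lambda>x y. if x \<in> Ob C \<and> y \<in> Ob C then restrict (Fext x y) (Hom CG x y) else (\<lambda>_. undefined))"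

lemma Hm_lin: "lin_functor CG D Fo Hm"
  unfolding lin_functor_def CG_simps(1) Hm_def
  by (simp add: Fext_idm Fext_cmp Fext_add Fext_smul)

lemma Hm_Fun_obj: "Fo \<in> extensional (Ob C) \<Longrightarrow> (Fo, Hm) \<in> Fun_obj CG D"
  unfolding Fun_obj_def ext_functor_def using Hm_lin by (auto simp: CG_simps(1) Hm_def)

lemma Hm_pullback:
  assumes "ext_functor C Fo Fm" "\<forall>a x. a \<notin> carrier G \<or> x \<notin> Ob C \<longrightarrow> \<phi> a x = undefined"
  shows "pullback_obj C G Ao Am (Fo, Hm) = ((Fo, Fm), \<phi>)"
proof -
  have Fo: "Fo \<in> extensional (Ob C)"
    and Fm: "\<And>x y. Fm x y \<in> extensional (if x \<in> Ob C \<and> y \<in> Ob C then Hom C x y else {})"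
    using assms(1) unfolding ext_functor_def by auto
  have "restrict Fo (Ob C) = Fo" using Fo by (simp add: extensional_restrict)
  moreover have "(\<lambda>x y. if x \<in> Ob C \<and> y \<in> Ob C
          then restrict (\<lambda>f. Hm x y (canP_mor C G Ao Am x y f)) (Hom C x y) else (\<lambda>_. undefined)) = Fm"
  proof (intro ext)
    fix x y f
    show "(if x \<in> Ob C \<and> y \<in> Ob C then restrict (\<lambda>f. Hm x y (canP_mor C G Ao Am x y f)) (Hom C x y)
           else (\<lambda>_. undefined)) f = Fm x y f"
      using Fm[of x y] by (auto simp: Hm_def Fext_canP extensional_def)
  qed
  moreover have "(\<lambda>a x. if a \<in> carrier G \<and> x \<in> Ob C then Hm x (Ao a x) (canP_phi C G Ao a x)
          else undefined) = \<phi>"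
    using assms(2) by (auto simp: Hm_def Fext_canPphi intro!: ext)
  ultimately show ?thesis unfolding pullback_obj_def fst_conv snd_conv by (simp only:)
qed

end

locale orbit_fun = gc C G Ao Am
  for C :: "('o, 'm, 'k::comm_ring_1) lcat" and G :: "'g monoid"
    and Ao :: "'g \<Rightarrow> 'o \<Rightarrow> 'o" and Am :: "'g \<Rightarrow> 'o \<Rightarrow> 'o \<Rightarrow> 'm \<Rightarrow> 'm" +
  fixes D :: "('o2, 'm2, 'k) lcat" and Ho :: "'o \<Rightarrow> 'o2" and HH :: "'o \<Rightarrow> 'o \<Rightarrow> ('g \<times> 'g \<Rightarrow> 'm) \<Rightarrow> 'm2"
  assumes linD: "lin_cat D" and H_Fun: "(Ho, HH) \<in> Fun_obj CG D"
begin

sublocale D: lcat D by (rule lcat.intro) (rule linD)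

lemma H_lin: "lin_functor CG D Ho HH" using H_Fun by (simp add: Fun_obj_def)

lemma H_ext: "ext_functor CG Ho HH" using H_Fun by (simp add: Fun_obj_def)

lemma H_ob[simp, intro]: "x \<in> Ob C \<Longrightarrow> Ho x \<in> Ob D"
  using lin_functor_ob[OF H_lin] by (simp add: CG_simps)

lemma H_hom[simp, intro]: "x \<in> Ob C \<Longrightarrow> y \<in> Ob C \<Longrightarrow> f \<in> Hom CG x y \<Longrightarrow> HH x y f \<in> Hom D (Ho x) (Ho y)"
  using lin_functor_hom[OF H_lin] by (simp add: CG_simps)

lemma H_idm[simp]: "x \<in> Ob C \<Longrightarrow> HH x x (Idm CG x) = Idm D (Ho x)"
  using lin_functor_idm[OF H_lin] by (simp add: CG_simps)

lemma H_cmp: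
  "x \<in> Ob C \<Longrightarrow> y \<in> Ob C \<Longrightarrow> z \<in> Ob C \<Longrightarrow> f \<in> Hom CG x y \<Longrightarrow> g \<in> Hom CG y z \<Longrightarrow>
   HH x z (Cmp CG x y z g f) = Cmp D (Ho x) (Ho y) (Ho z) (HH y z g) (HH x y f)"
  using lin_functor_cmp[OF H_lin] by (simp add: CG_simps)

lemma H_add:
  "x \<in> Ob C \<Longrightarrow> y \<in> Ob C \<Longrightarrow> f \<in> Hom CG x y \<Longrightarrow> g \<in> Hom CG x y \<Longrightarrow>
   HH x y (Addm CG x y f g) = Addm D (Ho x) (Ho y) (HH x y f) (HH x y g)"
  using lin_functor_add[OF H_lin] by (simp add: CG_simps)

lemma H_smul:
  "x \<in> Ob C \<Longrightarrow> y \<in> Ob C \<Longrightarrow> f \<in> Hom CG x y \<Longrightarrow>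
   HH x y (Smul CG x y a f) = Smul D (Ho x) (Ho y) a (HH x y f)"
  using lin_functor_smul[OF H_lin] by (simp add: CG_simps)

definition rFo :: "'o \<Rightarrow> 'o2" where "rFo = restrict Ho (Ob C)"
definition rFm :: "'o \<Rightarrow> 'o \<Rightarrow> 'm \<Rightarrow> 'm2" where "rFm = (\<lambda>x y. if x \<in> Ob C \<and> y \<in> Ob C
    then restrict (\<lambda>f. HH x y (canP_mor C G Ao Am x y f)) (Hom C x y) else (\<lambda>_. undefined))"
definition r\<phi> :: "'g \<Rightarrow> 'o \<Rightarrow> 'm2" where
  "r\<phi> = (\<lambda>a x. if a \<in> carrier G \<and> x \<in> Ob C then HH x (Ao a x) (canP_phi C G Ao a x) else undefined)"

lemma pullback_eq: "pullback_obj C G Ao Am (Ho, HH) = ((rFo, rFm), r\<phi>)"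
  unfolding pullback_obj_def rFo_def rFm_def r\<phi>_def snd_conv fst_conv by (simp add: restrict_def)

lemma rFo[simp]: "x \<in> Ob C \<Longrightarrow> rFo x = Ho x"
  by (simp add: rFo_def)

lemma rFm[simp]: "x \<in> Ob C \<Longrightarrow> y \<in> Ob C \<Longrightarrow> h \<in> Hom C x y \<Longrightarrow> rFm x y h = HH x y (canP_mor C G Ao Am x y h)"
  by (simp add: rFm_def)

lemma r\<phi>[simp]: "a \<in> carrier G \<Longrightarrow> x \<in> Ob C \<Longrightarrow> r\<phi> a x = HH x (Ao a x) (canP_phi C G Ao a x)"
  by (simp add: r\<phi>_def)

lemma restr_lin: "lin_functor C D rFo rFm"
  unfolding lin_functor_def
  by (simp add: canP_idm canP_cmp[symmetric] canP_add canP_smul H_cmp H_add H_smul)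

text \<open>... and composing with the invariance adjuster of \<open>P\<close> gives one of \<open>H P\<close>: the
  identities for \<open>\<phi>\<close> in \<open>C/G\<close> are transported by \<open>H\<close>; the inverse of \<open>H \<phi>\<^sub>a\<close> is
  \<open>H \<phi>\<^sub>a\<^sub>\<inverse>\<close>.\<close>
lemma restr_inv: "inv_functor C D G Ao Am rFo rFm r\<phi>"
  unfolding inv_functor_def
proof (intro conjI ballI restr_lin)
  fix a x assume "a \<in> carrier G" "x \<in> Ob C"
  then show "r\<phi> a x \<in> Hom D (rFo x) (rFo (Ao a x))" by auto
next
  fix a x y f assume a: "a \<in> carrier G" and x: "x \<in> Ob C" and y: "y \<in> Ob C" and f: "f \<in> Hom C x y"
  show "Cmp D (rFo x) (rFo y) (rFo (Ao a y)) (r\<phi> a y) (rFm x y f) =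
        Cmp D (rFo x) (rFo (Ao a x)) (rFo (Ao a y)) (rFm (Ao a x) (Ao a y) (Am a x y f)) (r\<phi> a x)"
    using phi_nat_CG[OF x y f a] a x y f by (simp add: H_cmp[symmetric])
next
  fix a x assume a: "a \<in> carrier G" and x: "x \<in> Ob C"
  have ia: "inv\<^bsub>G\<^esub> a \<in> carrier G" using a by simp
  let ?\<psi> = "HH (Ao a x) x (canP_phi C G Ao (inv\<^bsub>G\<^esub> a) (Ao a x))"
  have ph: "canP_phi C G Ao (inv\<^bsub>G\<^esub> a) (Ao a x) \<in> Hom CG (Ao a x) x"
    using phi_back_hom[OF x a] .
  have c1: "Cmp CG x (Ao a x) x (canP_phi C G Ao (inv\<^bsub>G\<^esub> a) (Ao a x)) (canP_phi C G Ao a x) = Idm CG x"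
    using phi_comp_CG[OF x a ia] phi_one_CG[OF x] a x by simp
  have c2: "Cmp CG (Ao a x) x (Ao a x) (canP_phi C G Ao a x) (canP_phi C G Ao (inv\<^bsub>G\<^esub> a) (Ao a x)) = Idm CG (Ao a x)"
    using phi_comp_CG[of "Ao a x" "inv\<^bsub>G\<^esub> a" a] phi_one_CG[of "Ao a x"] a x ia by simp
  show "\<exists>\<psi>\<in>Hom D (rFo (Ao a x)) (rFo x).
        Cmp D (rFo x) (rFo (Ao a x)) (rFo x) \<psi> (r\<phi> a x) = Idm D (rFo x) \<and>
        Cmp D (rFo (Ao a x)) (rFo x) (rFo (Ao a x)) (r\<phi> a x) \<psi> = Idm D (rFo (Ao a x))"
  proof (intro bexI conjI)
    show "?\<psi> \<in> Hom D (rFo (Ao a x)) (rFo x)" using ph a x by auto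
    show "Cmp D (rFo x) (rFo (Ao a x)) (rFo x) ?\<psi> (r\<phi> a x) = Idm D (rFo x)"
      using a x ph by (simp add: H_cmp[symmetric] c1)
    show "Cmp D (rFo (Ao a x)) (rFo x) (rFo (Ao a x)) (r\<phi> a x) ?\<psi> = Idm D (rFo (Ao a x))"
      using a x ph by (simp add: H_cmp[symmetric] c2)
  qed
next
  fix x assume "x \<in> Ob C"
  then show "r\<phi> \<one>\<^bsub>G\<^esub> x = Idm D (rFo x)" by (simp add: phi_one_CG)
next
  fix a b x assume a: "a \<in> carrier G" and b: "b \<in> carrier G" and x: "x \<in> Ob C"
  show "Cmp D (rFo x) (rFo (Ao a x)) (rFo (Ao b (Ao a x))) (r\<phi> b (Ao a x)) (r\<phi> a x) = r\<phi> (b \<otimes>\<^bsub>G\<^esub> a) x"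
    using phi_comp_CG[OF x a b] a b x by (simp add: H_cmp[symmetric])
qed

lemma pullback_Inv_obj: "pullback_obj C G Ao Am (Ho, HH) \<in> Inv_obj C D G Ao Am"
  unfolding pullback_eq Inv_obj_def using restr_inv
  by (auto simp: ext_functor_def rFo_def rFm_def r\<phi>_def)

lemma H_decomp:
  assumes x: "x \<in> Ob C" and y: "y \<in> Ob C" and f: "f \<in> Hom CG x y"
  shows "HH x y f = hsum D (Ho x) (Ho y) (col1_support f x y)
     (\<lambda>\<beta>. Cmp D (Ho x) (Ho (Ao \<beta> y)) (Ho y) (HH (Ao \<beta> y) y (canP_phi C G Ao (inv\<^bsub>G\<^esub> \<beta>) (Ao \<beta> y)))
                 (HH x (Ao \<beta> y) (canP_mor C G Ao Am x (Ao \<beta> y) (f (\<beta>, \<one>\<^bsub>G\<^esub>)))))"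
proof -
  let ?S = "col1_support f x y"
  let ?T = "\<lambda>\<beta>. Cmp CG x (Ao \<beta> y) y (canP_phi C G Ao (inv\<^bsub>G\<^esub> \<beta>) (Ao \<beta> y))
                 (canP_mor C G Ao Am x (Ao \<beta> y) (f (\<beta>, \<one>\<^bsub>G\<^esub>)))"
  have fin: "finite ?S" using orbit_col1_finite[OF f x] .
  have T_hom: "?T \<beta> \<in> Hom CG x y" if "\<beta> \<in> carrier G" for \<beta>
    using that x y f by (intro cmp_CG_hom) auto
  have "HH x y f = HH x y (hsum CG x y ?S ?T)" using decomp_CG[OF x y f] by simp
  also have "\<dots> = hsum D (Ho x) (Ho y) ?S (\<lambda>\<beta>. HH x y (?T \<beta>))"
    by (rule additive_map_hsum[where C=CG]) (use x y fin T_hom zero_CG_idem H_add linD in auto)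
  also have "\<dots> = hsum D (Ho x) (Ho y) ?S (\<lambda>\<beta>. Cmp D (Ho x) (Ho (Ao \<beta> y)) (Ho y)
      (HH (Ao \<beta> y) y (canP_phi C G Ao (inv\<^bsub>G\<^esub> \<beta>) (Ao \<beta> y)))
      (HH x (Ao \<beta> y) (canP_mor C G Ao Am x (Ao \<beta> y) (f (\<beta>, \<one>\<^bsub>G\<^esub>)))))"
    using fin x y f by (intro hsum_cong) (auto simp: H_cmp)
  finally show ?thesis .
qed

lemma H_eq_ext:
  assumes x: "x \<in> Ob C" and y: "y \<in> Ob C" and f: "f \<in> Hom CG x y"
  shows "HH x y f = ext_mor C G Ao D rFo rFm r\<phi> x y f"
proof -
  have "ext_mor C G Ao D rFo rFm r\<phi> x y f
      = hsum D (Ho x) (Ho y) (col1_support f x y) (ext_term C G Ao D rFo rFm r\<phi> f x y)"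
    using x y by (simp add: ext_mor_def)
  then show ?thesis unfolding H_decomp[OF assms] using orbit_col1_finite[OF f x] x y f
    by (simp only:) (intro hsum_cong, auto simp: ext_term_def phi_back_def)
qed

end

section \<open>Natural transformations\<close>

text \<open>For functors \<open>H, H'\<close> on \<open>C/G\<close>, the morphisms between their restrictions in
  \<open>Inv(C, D)\<close> are exactly the natural transformations \<open>H \<rightarrow> H'\<close>: naturality with respect to
  the images of \<open>P\<close> and \<open>\<phi>\<close> implies naturality everywhere by the decomposition.\<close>

locale orbit_fun2 = H1: orbit_fun C G Ao Am D Ho HH + H2: orbit_fun C G Ao Am D Ho' HH'
  for C :: "('o, 'm, 'k::comm_ring_1) lcat" and G :: "'g monoid"
    and Ao :: "'g \<Rightarrow> 'o \<Rightarrow> 'o" and Am :: "'g \<Rightarrow> 'o \<Rightarrow> 'o \<Rightarrow> 'm \<Rightarrow> 'm"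
    and D :: "('o2, 'm2, 'k) lcat" and Ho HH Ho' HH'
begin

lemma Inv_hom_iff:
  "\<theta> \<in> Inv_hom C D G Ao (pullback_obj C G Ao Am (Ho, HH)) (pullback_obj C G Ao Am (Ho', HH')) \<longleftrightarrow>
   \<theta> \<in> extensional (Ob C) \<and>
   (\<forall>x\<in>Ob C. \<theta> x \<in> Hom D (Ho x) (Ho' x)) \<and>
   (\<forall>x\<in>Ob C. \<forall>y\<in>Ob C. \<forall>f\<in>Hom C x y.
        Cmp D (Ho x) (Ho y) (Ho' y) (\<theta> y) (HH x y (canP_mor C G Ao Am x y f)) =
        Cmp D (Ho x) (Ho' x) (Ho' y) (HH' x y (canP_mor C G Ao Am x y f)) (\<theta> x)) \<and>
   (\<forall>a\<in>carrier G. \<forall>x\<in>Ob C.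
        Cmp D (Ho x) (Ho (Ao a x)) (Ho' (Ao a x)) (\<theta> (Ao a x)) (HH x (Ao a x) (canP_phi C G Ao a x)) =
        Cmp D (Ho x) (Ho' x) (Ho' (Ao a x)) (HH' x (Ao a x) (canP_phi C G Ao a x)) (\<theta> x))"
  unfolding Inv_hom_def nat_trans_def H1.pullback_eq H2.pullback_eq by auto

lemma Fun_hom_iff:
  "\<eta> \<in> Fun_hom H1.CG D (Ho, HH) (Ho', HH') \<longleftrightarrow>
   \<eta> \<in> extensional (Ob C) \<and>
   (\<forall>x\<in>Ob C. \<eta> x \<in> Hom D (Ho x) (Ho' x)) \<and>
   (\<forall>x\<in>Ob C. \<forall>y\<in>Ob C. \<forall>f\<in>Hom H1.CG x y.
        Cmp D (Ho x) (Ho y) (Ho' y) (\<eta> y) (HH x y f) = Cmp D (Ho x) (Ho' x) (Ho' y) (HH' x y f) (\<eta> x))"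
  unfolding Fun_hom_def nat_trans_def by (simp add: H1.CG_simps)

lemma Fun_to_Inv:
  "\<eta> \<in> Fun_hom H1.CG D (Ho, HH) (Ho', HH') \<Longrightarrow>
   \<eta> \<in> Inv_hom C D G Ao (pullback_obj C G Ao Am (Ho, HH)) (pullback_obj C G Ao Am (Ho', HH'))"
  unfolding Inv_hom_iff Fun_hom_iff by (blast intro: H1.canP_hom H1.canPphi_hom H1.Ao_ob)

lemma Inv_hom_summand:
  assumes \<theta>: "\<theta> \<in> Inv_hom C D G Ao (pullback_obj C G Ao Am (Ho, HH)) (pullback_obj C G Ao Am (Ho', HH'))"
    and x: "x \<in> Ob C" and y: "y \<in> Ob C" and b: "\<beta> \<in> carrier G" and h: "h \<in> Hom C x (Ao \<beta> y)"
  shows "Cmp D (Ho x) (Ho y) (Ho' y) (\<theta> y)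
           (Cmp D (Ho x) (Ho (Ao \<beta> y)) (Ho y) (HH (Ao \<beta> y) y (canP_phi C G Ao (inv\<^bsub>G\<^esub> \<beta>) (Ao \<beta> y)))
              (HH x (Ao \<beta> y) (canP_mor C G Ao Am x (Ao \<beta> y) h)))
       = Cmp D (Ho x) (Ho' x) (Ho' y)
           (Cmp D (Ho' x) (Ho' (Ao \<beta> y)) (Ho' y) (HH' (Ao \<beta> y) y (canP_phi C G Ao (inv\<^bsub>G\<^esub> \<beta>) (Ao \<beta> y)))
              (HH' x (Ao \<beta> y) (canP_mor C G Ao Am x (Ao \<beta> y) h))) (\<theta> x)"
proof (rule H1.D.nat_square_paste)
  note T = \<theta>[unfolded Inv_hom_iff]
  have by_ob: "Ao \<beta> y \<in> Ob C" using b y by simp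
  show "Cmp D (Ho x) (Ho (Ao \<beta> y)) (Ho' (Ao \<beta> y)) (\<theta> (Ao \<beta> y)) (HH x (Ao \<beta> y) (canP_mor C G Ao Am x (Ao \<beta> y) h))
      = Cmp D (Ho x) (Ho' x) (Ho' (Ao \<beta> y)) (HH' x (Ao \<beta> y) (canP_mor C G Ao Am x (Ao \<beta> y) h)) (\<theta> x)"
    using T x by_ob h by blast
  have "inv\<^bsub>G\<^esub> \<beta> \<in> carrier G" using b by simp
  then show "Cmp D (Ho (Ao \<beta> y)) (Ho y) (Ho' y) (\<theta> y) (HH (Ao \<beta> y) y (canP_phi C G Ao (inv\<^bsub>G\<^esub> \<beta>) (Ao \<beta> y)))
      = Cmp D (Ho (Ao \<beta> y)) (Ho' (Ao \<beta> y)) (Ho' y) (HH' (Ao \<beta> y) y (canP_phi C G Ao (inv\<^bsub>G\<^esub> \<beta>) (Ao \<beta> y)))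
          (\<theta> (Ao \<beta> y))"
    using T[THEN conjunct2, THEN conjunct2, THEN conjunct2, rule_format, of "inv\<^bsub>G\<^esub> \<beta>" "Ao \<beta> y"] b y by simp
qed (use \<theta>[unfolded Inv_hom_iff] b x y h in auto)

lemma Inv_to_Fun:
  assumes \<theta>: "\<theta> \<in> Inv_hom C D G Ao (pullback_obj C G Ao Am (Ho, HH)) (pullback_obj C G Ao Am (Ho', HH'))"
  shows "\<theta> \<in> Fun_hom H1.CG D (Ho, HH) (Ho', HH')"
proof -
  have \<theta>_ext: "\<theta> \<in> extensional (Ob C)" and \<theta>_hom: "\<And>x. x \<in> Ob C \<Longrightarrow> \<theta> x \<in> Hom D (Ho x) (Ho' x)"
    using \<theta> unfolding Inv_hom_iff by auto
  show ?thesis unfolding Fun_hom_iff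
  proof (intro conjI ballI \<theta>_ext \<theta>_hom)
    fix x y f assume x: "x \<in> Ob C" and y: "y \<in> Ob C" and f: "f \<in> Hom H1.CG x y"
    let ?S = "H1.col1_support f x y"
    let ?Ph = "\<lambda>\<beta>. canP_phi C G Ao (inv\<^bsub>G\<^esub> \<beta>) (Ao \<beta> y)"
    let ?P = "\<lambda>\<beta>. canP_mor C G Ao Am x (Ao \<beta> y) (f (\<beta>, \<one>\<^bsub>G\<^esub>))"
    have fin: "finite ?S" using H1.orbit_col1_finite[OF f x] .
    have "Cmp D (Ho x) (Ho y) (Ho' y) (\<theta> y) (HH x y f) =
        hsum D (Ho x) (Ho' y) ?S (\<lambda>\<beta>. Cmp D (Ho x) (Ho y) (Ho' y) (\<theta> y)
          (Cmp D (Ho x) (Ho (Ao \<beta> y)) (Ho y) (HH (Ao \<beta> y) y (?Ph \<beta>)) (HH x (Ao \<beta> y) (?P \<beta>))))"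
      unfolding H1.H_decomp[OF x y f]
      by (rule H1.D.hsum_cmp_r) (use fin x y f \<theta>_hom in \<open>auto intro!: H1.D.cmp_hom\<close>)
    also have "\<dots> = hsum D (Ho x) (Ho' y) ?S (\<lambda>\<beta>. Cmp D (Ho x) (Ho' x) (Ho' y)
          (Cmp D (Ho' x) (Ho' (Ao \<beta> y)) (Ho' y) (HH' (Ao \<beta> y) y (?Ph \<beta>)) (HH' x (Ao \<beta> y) (?P \<beta>))) (\<theta> x))"
      using fin x y f by (intro hsum_cong) (auto intro!: Inv_hom_summand[OF \<theta>])
    also have "\<dots> = Cmp D (Ho x) (Ho' x) (Ho' y) (HH' x y f) (\<theta> x)"
      unfolding H2.H_decomp[OF x y f]
      by (rule H1.D.hsum_cmp_l[symmetric]) (use fin x y f \<theta>_hom in \<open>auto intro!: H1.D.cmp_hom\<close>)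
    finally show "Cmp D (Ho x) (Ho y) (Ho' y) (\<theta> y) (HH x y f) = Cmp D (Ho x) (Ho' x) (Ho' y) (HH' x y f) (\<theta> x)" .
  qed
qed

end

section \<open>The isomorphism \<open>Fun(C/G, D) \<cong> Inv(C, D)\<close>\<close>

context gc
begin

lemma orbit_funI: "lin_cat D \<Longrightarrow> (Ho, HH) \<in> Fun_obj CG D \<Longrightarrow> orbit_fun C G Ao Am D Ho HH"
  using gcat by (simp add: orbit_fun_def orbit_fun_axioms_def gc_def)

text \<open>Injective on objects: a functor on \<open>C/G\<close> is the extension of its restriction.\<close>
lemma pullback_obj_inj:
  assumes linD: "lin_cat D"
  shows "inj_on (pullback_obj C G Ao Am) (Fun_obj CG D)"
proof (rule inj_onI)
  fix H H' assume HF: "H \<in> Fun_obj CG D" and HF': "H' \<in> Fun_obj CG D"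
    and eq: "pullback_obj C G Ao Am H = pullback_obj C G Ao Am H'"
  obtain Ho HH Ho' HH' where H: "H = (Ho, HH)" and H': "H' = (Ho', HH')" by fastforce
  interpret H1: orbit_fun C G Ao Am D Ho HH using orbit_funI linD HF H by blast
  interpret H2: orbit_fun C G Ao Am D Ho' HH' using orbit_funI linD HF' H' by blast
  have e: "H1.rFo = H2.rFo" "H1.rFm = H2.rFm" "H1.r\<phi> = H2.r\<phi>"
    using eq unfolding H H' H1.pullback_eq H2.pullback_eq by auto
  have ex1: "Ho \<in> extensional (Ob C)"
    "\<And>x y. HH x y \<in> extensional (if x \<in> Ob C \<and> y \<in> Ob C then Hom CG x y else {})"
    using H1.H_ext unfolding ext_functor_def by (auto simp: CG_simps)
  have ex2: "Ho' \<in> extensional (Ob C)"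
    "\<And>x y. HH' x y \<in> extensional (if x \<in> Ob C \<and> y \<in> Ob C then Hom CG x y else {})"
    using H2.H_ext unfolding ext_functor_def by (auto simp: CG_simps)
  have "Ho = Ho'"
    using e(1) ex1(1) ex2(1) unfolding H1.rFo_def H2.rFo_def by (metis extensional_restrict)
  moreover have "HH x y f = HH' x y f" for x y f
  proof (cases "x \<in> Ob C \<and> y \<in> Ob C \<and> f \<in> Hom CG x y")
    case True
    then show ?thesis using H1.H_eq_ext H2.H_eq_ext e by auto
  next
    case False
    then show ?thesis using ex1(2)[of x y] ex2(2)[of x y] by (auto simp: extensional_def split: if_splits)
  qed
  ultimately show "H = H'" using H H' by (simp add: fun_eq_iff)
qed

text \<open>Surjective on objects: every invariant functor is the restriction of its extension.\<close>
lemma pullback_obj_surj: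
  assumes linD: "lin_cat D"
  shows "pullback_obj C G Ao Am ` Fun_obj CG D = Inv_obj C D G Ao Am"
proof (intro equalityI subsetI)
  fix P assume "P \<in> pullback_obj C G Ao Am ` Fun_obj CG D"
  then obtain Ho HH where HF: "(Ho, HH) \<in> Fun_obj CG D" and P: "P = pullback_obj C G Ao Am (Ho, HH)"
    by auto
  interpret H1: orbit_fun C G Ao Am D Ho HH using orbit_funI linD HF by blast
  show "P \<in> Inv_obj C D G Ao Am" using H1.pullback_Inv_obj P by simp
next
  fix P assume PI: "P \<in> Inv_obj C D G Ao Am"
  obtain Fo Fm \<phi> where P: "P = ((Fo, Fm), \<phi>)" by (metis prod.collapse)
  have iv: "inv_functor C D G Ao Am Fo Fm \<phi>" and ef: "ext_functor C Fo Fm"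
    and ud: "\<forall>a x. a \<notin> carrier G \<or> x \<notin> Ob C \<longrightarrow> \<phi> a x = undefined"
    using PI unfolding P Inv_obj_def by auto
  interpret I: inv_fun C G Ao Am D Fo Fm \<phi>
    using gcat linD iv by (simp add: inv_fun_def inv_fun_axioms_def gc_def)
  have "(Fo, I.Hm) \<in> Fun_obj CG D" using I.Hm_Fun_obj ef by (simp add: ext_functor_def)
  moreover have "pullback_obj C G Ao Am (Fo, I.Hm) = P" using I.Hm_pullback[OF ef ud] P by simp
  ultimately show "P \<in> pullback_obj C G Ao Am ` Fun_obj CG D" by (metis image_eqI)
qed

text \<open>On morphisms the functor is (up to restriction to \<open>Ob C\<close>) the identity, and the two
  hom-sets coincide.\<close>
lemma pullback_mor_bij:
  assumes linD: "lin_cat D" and HF: "H \<in> Fun_obj CG D" and HF': "H' \<in> Fun_obj CG D"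
  shows "bij_betw (pullback_mor C) (Fun_hom CG D H H')
            (Inv_hom C D G Ao (pullback_obj C G Ao Am H) (pullback_obj C G Ao Am H'))"
proof -
  obtain Ho HH Ho' HH' where H: "H = (Ho, HH)" and H': "H' = (Ho', HH')" by fastforce
  interpret H2: orbit_fun2 C G Ao Am D Ho HH Ho' HH'
    using orbit_funI[OF linD HF[unfolded H]] orbit_funI[OF linD HF'[unfolded H']]
    by (simp add: orbit_fun2_def)
  have homs_eq: "Fun_hom CG D H H' = Inv_hom C D G Ao (pullback_obj C G Ao Am H) (pullback_obj C G Ao Am H')"
    unfolding H H' using H2.Fun_to_Inv H2.Inv_to_Fun by blast
  have pm_id: "pullback_mor C \<eta> = \<eta>" if "\<eta> \<in> Fun_hom CG D H H'" for \<eta>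
    using that unfolding H Fun_hom_def nat_trans_def pullback_mor_def by (simp add: CG_simps(1) extensional_restrict)
  show ?thesis
  proof (rule bij_betw_imageI)
    show "inj_on (pullback_mor C) (Fun_hom CG D H H')" by (rule inj_onI) (simp add: pm_id)
    have "pullback_mor C ` Fun_hom CG D H H' = (\<lambda>\<eta>. \<eta>) ` Fun_hom CG D H H'"
      by (rule image_cong[OF refl pm_id])
    then show "pullback_mor C ` Fun_hom CG D H H'
        = Inv_hom C D G Ao (pullback_obj C G Ao Am H) (pullback_obj C G Ao Am H')"
      by (simp add: homs_eq)
  qed
qed

lemma pullback_mor_id:
  "pullback_mor C (nt_id CG D (fst H)) = nt_id C D (fst (fst (pullback_obj C G Ao Am H)))"
  unfolding pullback_mor_def nt_id_def pullback_obj_def CG_simps(1)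
  by (intro restrict_ext) simp

lemma pullback_mor_comp:
  "pullback_mor C (nt_comp CG D (fst H) (fst H') (fst H'') \<eta>' \<eta>) =
   nt_comp C D (fst (fst (pullback_obj C G Ao Am H))) (fst (fst (pullback_obj C G Ao Am H')))
     (fst (fst (pullback_obj C G Ao Am H''))) (pullback_mor C \<eta>') (pullback_mor C \<eta>)"
  unfolding pullback_mor_def nt_comp_def pullback_obj_def CG_simps(1)
  by (intro restrict_ext) simp

end

theorem mainTheorem3:
  fixes C :: "('o, 'm, 'k::comm_ring_1) lcat"
    and G :: "'g monoid"
    and Ao :: "'g \<Rightarrow> 'o \<Rightarrow> 'o"
    and Am :: "'g \<Rightarrow> 'o \<Rightarrow> 'o \<Rightarrow> 'm \<Rightarrow> 'm"
    and D :: "('o2, 'm2, 'k) lcat"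
  assumes "gcat C G Ao Am"
    and "lin_cat D"
  defines "CG \<equiv> orbit_cat C G Ao Am"
  shows
    \<comment> \<open>bijective on objects\<close>
    "bij_betw (pullback_obj C G Ao Am) (Fun_obj CG D) (Inv_obj C D G Ao Am)
     \<comment> \<open>bijective on each hom-set\<close>
     \<and> (\<forall>H\<in>Fun_obj CG D. \<forall>H'\<in>Fun_obj CG D.
          bij_betw (pullback_mor C) (Fun_hom CG D H H')
            (Inv_hom C D G Ao (pullback_obj C G Ao Am H) (pullback_obj C G Ao Am H')))
     \<comment> \<open>preserves identities\<close>
     \<and> (\<forall>H\<in>Fun_obj CG D.
          pullback_mor C (nt_id CG D (fst H)) = nt_id C D (fst (fst (pullback_obj C G Ao Am H))))
     \<comment> \<open>preserves composition\<close>
     \<and> (\<forall>H\<in>Fun_obj CG D. \<forall>H'\<in>Fun_obj CG D. \<forall>H''\<in>Fun_obj CG D.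
          \<forall>\<eta>\<in>Fun_hom CG D H H'. \<forall>\<eta>'\<in>Fun_hom CG D H' H''.
          pullback_mor C (nt_comp CG D (fst H) (fst H') (fst H'') \<eta>' \<eta>) =
          nt_comp C D (fst (fst (pullback_obj C G Ao Am H))) (fst (fst (pullback_obj C G Ao Am H')))
            (fst (fst (pullback_obj C G Ao Am H''))) (pullback_mor C \<eta>') (pullback_mor C \<eta>))"
proof -
  interpret gc C G Ao Am by (rule gc.intro) (rule assms(1))
  have "bij_betw (pullback_obj C G Ao Am) (Fun_obj (orbit_cat C G Ao Am) D) (Inv_obj C D G Ao Am)"
    using pullback_obj_inj[OF assms(2)] pullback_obj_surj[OF assms(2)] by (rule bij_betw_imageI)
  then show ?thesis unfolding CG_def
    using pullback_mor_bij[OF assms(2)] pullback_mor_id pullback_mor_comp by blast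
qed
end
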